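(* Let $X_1,\ldots,X_n$ be $p$-dimensional random vectors satisfying the assumption below for some $w,u>0$, with $n\geq\log(ep)$. Let $\mathbb{E}_0$ denote expectation when $\mathrm{Cov}(X_i)$ is constant in $i$, and $\mathbb{E}_1$ expectation when $\mathrm{Cov}(X_i)=\Sigma_1$ for $i\leq t_0$ and $\mathrm{Cov}(X_i)=\Sigma_2$ for $i>t_0$, for some $t_0\in[n-1]$ and positive definite $\Sigma_1,\Sigma_2$. Given $\delta\in(0,1)$, there exists $\lambda_0>0$ depending only on $\delta,w,u$ such that for every $\lambda\geq\lambda_0$ there is a constant $C>0$ depending only on $\lambda,\delta,w,u$ such that $$\mathbb{E}_0\widehat\psi_{\mathrm{adaptive},\lambda}(X)+\mathbb{E}_1(1-\widehat\psi_{\mathrm{adaptive},\lambda}(X))\leq\delta$$ as long as, for some $s\in[p]$, $$\min(t_0,n-t_0)\Big(\frac{\lambda^s_{\max}(\Sigma_1-\Sigma_2)}{\lambda^s_{\max}(\Sigma_1)\vee\lambda^s_{\max}(\Sigma_2)}\Big)^2\geq Cs^2\{\log(ep)\vee\log\log(8n)\}.$$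
   Context: Assumption (with $w,u>0$): (A) the $X_i$ are independent and mean zero; (B) for all $i\in[n]$ and $v\in S^{p-1}$, $v^\top X_i/\{\mathbb{E}(v^\top X_i)^2\}^{1/2}$ has a continuous density bounded above by $w$; (C) for all $i$ and $v\in S^{p-1}$, $\|v^\top X_i\|_{\Psi_2}^2\leq u\,\mathbb{E}(v^\top X_i)^2$, where $\|Y\|_{\Psi_2}=\inf\{t>0:\mathbb{E}\exp(Y^2/t^2)\leq2\}$. Notation: $S^{p-1}_s=\{v\in S^{p-1}:\|v\|_0\leq s\}$, $\lambda^s_{\max}(A)=\sup_{v\in S^{p-1}_s}|v^\top Av|$ for symmetric $A$. For symmetric $A\in\mathbb{R}^{p\times p}$, $\widehat\lambda^s_{\max}(A)=\sup_{Z\in N(p,s)}|\mathrm{Tr}(AZ)|$, where $N(p,s)=\{Z\in\mathbb{R}^{p\times p}: Z\succcurlyeq0,\ \mathrm{Tr}(Z)=1,\ \|Z\|_1\leq s\}$ and $\|Z\|_1$ is the sum of absolute values of the entries. $X=(X_1^\top,\ldots,X_n^\top)^\top$; $\widehat\Sigma_{1,t}=t^{-1}\sum_{i=1}^tX_iX_i^\top$, $\widehat\Sigma_{2,t}=t^{-1}\sum_{i=1}^tX_{n-i+1}X_{n-i+1}^\top$; $\widehat S_{t,s}=\widehat\lambda^s_{\max}(\widehat\Sigma_{1,t}-\widehat\Sigma_{2,t})$; $\widehat\sigma^2_{\mathrm{con}}=\widehat\lambda^1_{\max}(\widehat\Sigma_{1,\lceil\log(ep)\rceil})\wedge\widehat\lambda^1_{\max}(\widehat\Sigma_{2,\lceil\log(ep)\rceil})$;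 with $g=\log(ep)\vee\log\log(8n)$, $h(p,n,s,t)=s\{\sqrt{g/t}\vee g/t\}$; $\mathcal{T}=\{2^0,\ldots,2^{\lfloor\log_2(n/2)\rfloor}\}$, $\mathcal{S}=\{2^0,\ldots,2^{\lfloor\log_2 p\rfloor}\}$; and $$\widehat\psi_{\mathrm{adaptive},\lambda}(X)=\max_{t\in\mathcal{T}}\max_{s\in\mathcal{S}}\mathbb{1}\{\widehat S_{t,s}>\lambda\widehat\sigma^2_{\mathrm{con}}h(p,n,s,t)\}.$$ *)

theory Defs
  imports "HOL-Probability.Probability"
begin

text \<open>A p-vector is a
function nat => real whose relevant coordinates are 0..p-1; a p x p matrix is a function
nat => nat => real with relevant entries (j,k), j,k < p. A data set X = (X_1,...,X_n) is a
function nat => nat => real, where X i is the i-th observation (i in 1..n) and X i j its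
j-th coordinate.\<close>

type_synonym vec = "nat \<Rightarrow> real"
type_synonym mat = "nat \<Rightarrow> nat \<Rightarrow> real"
type_synonym data = "nat \<Rightarrow> nat \<Rightarrow> real"

definition inner_p :: "nat \<Rightarrow> vec \<Rightarrow> vec \<Rightarrow> real" where
  "inner_p p v x = (\<Sum>j<p. v j * x j)"

definition quad_form :: "nat \<Rightarrow> mat \<Rightarrow> vec \<Rightarrow> real" where
  "quad_form p A v = (\<Sum>j<p. \<Sum>k<p. v j * A j k * v k)"

definition unit_sphere :: "nat \<Rightarrow> vec set" where
  "unit_sphere p = {v. (\<forall>j\<ge>p. v j = 0) \<and> (\<Sum>j<p. (v j)\<^sup>2) = 1}"

definition sparse_sphere :: "nat \<Rightarrow> nat \<Rightarrow> vec set" where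
  "sparse_sphere p s = {v \<in> unit_sphere p. card {j. j < p \<and> v j \<noteq> 0} \<le> s}"

definition lam_max_s :: "nat \<Rightarrow> nat \<Rightarrow> mat \<Rightarrow> real" where
  "lam_max_s p s A = (SUP v \<in> sparse_sphere p s. \<bar>quad_form p A v\<bar>)"

definition symmetric_p :: "nat \<Rightarrow> mat \<Rightarrow> bool" where
  "symmetric_p p A \<longleftrightarrow> (\<forall>j<p. \<forall>k<p. A j k = A k j)"

definition psd_p :: "nat \<Rightarrow> mat \<Rightarrow> bool" where
  "psd_p p A \<longleftrightarrow> symmetric_p p A \<and> (\<forall>v. 0 \<le> quad_form p A v)"

definition pos_def_p :: "nat \<Rightarrow> mat \<Rightarrow> bool" where
  "pos_def_p p A \<longleftrightarrow> symmetric_p p A \<and>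
     (\<forall>v. (\<exists>j<p. v j \<noteq> 0) \<longrightarrow> 0 < quad_form p A v)"

definition trace_p :: "nat \<Rightarrow> mat \<Rightarrow> real" where
  "trace_p p A = (\<Sum>j<p. A j j)"

definition mat_mult_p :: "nat \<Rightarrow> mat \<Rightarrow> mat \<Rightarrow> mat" where
  "mat_mult_p p A B = (\<lambda>j k. \<Sum>l<p. A j l * B l k)"

definition entry_l1_p :: "nat \<Rightarrow> mat \<Rightarrow> real" where
  "entry_l1_p p Z = (\<Sum>j<p. \<Sum>k<p. \<bar>Z j k\<bar>)"

definition N_set :: "nat \<Rightarrow> real \<Rightarrow> mat set" where
  "N_set p s = {Z. psd_p p Z \<and> trace_p p Z = 1 \<and> entry_l1_p p Z \<le> s}"

definition lam_hat_s :: "nat \<Rightarrow> nat \<Rightarrow> mat \<Rightarrow> real" where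
  "lam_hat_s p s A = (SUP Z \<in> N_set p (real s). \<bar>trace_p p (mat_mult_p p A Z)\<bar>)"

definition Sigma_hat_1 :: "data \<Rightarrow> nat \<Rightarrow> mat" where
  "Sigma_hat_1 X t = (\<lambda>j k. (1 / real t) * (\<Sum>i\<in>{1..t}. X i j * X i k))"

definition Sigma_hat_2 :: "nat \<Rightarrow> data \<Rightarrow> nat \<Rightarrow> mat" where
  "Sigma_hat_2 n X t = (\<lambda>j k. (1 / real t) * (\<Sum>i\<in>{1..t}. X (n - i + 1) j * X (n - i + 1) k))"

definition S_hat :: "nat \<Rightarrow> nat \<Rightarrow> data \<Rightarrow> nat \<Rightarrow> nat \<Rightarrow> real" where
  "S_hat n p X t s = lam_hat_s p s (\<lambda>j k. Sigma_hat_1 X t j k - Sigma_hat_2 n X t j k)"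

definition sigma2_con :: "nat \<Rightarrow> nat \<Rightarrow> data \<Rightarrow> real" where
  "sigma2_con n p X =
     min (lam_hat_s p 1 (Sigma_hat_1 X (nat \<lceil>ln (exp 1 * real p)\<rceil>)))
         (lam_hat_s p 1 (Sigma_hat_2 n X (nat \<lceil>ln (exp 1 * real p)\<rceil>)))"

definition g_fun :: "nat \<Rightarrow> nat \<Rightarrow> real" where
  "g_fun p n = max (ln (exp 1 * real p)) (ln (ln (8 * real n)))"

definition h_fun :: "nat \<Rightarrow> nat \<Rightarrow> nat \<Rightarrow> nat \<Rightarrow> real" where
  "h_fun p n s t = real s * max (sqrt (g_fun p n / real t)) (g_fun p n / real t)"

definition T_grid :: "nat \<Rightarrow> nat set" where
  "T_grid n = {2 ^ k | k::nat. int k \<le> \<lfloor>log 2 (real n / 2)\<rfloor>}"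

definition S_grid :: "nat \<Rightarrow> nat set" where
  "S_grid p = {2 ^ k | k::nat. int k \<le> \<lfloor>log 2 (real p)\<rfloor>}"

definition psi_adaptive :: "nat \<Rightarrow> nat \<Rightarrow> real \<Rightarrow> data \<Rightarrow> real" where
  "psi_adaptive n p lam X =
     (if \<exists>t\<in>T_grid n. \<exists>s\<in>S_grid p.
           S_hat n p X t s > lam * sigma2_con n p X * h_fun p n s t
      then 1 else 0)"

text \<open>Orlicz psi_2 norm (extended-real valued; infinity if the defining set is empty)\<close>
definition psi2_norm :: "'a measure \<Rightarrow> ('a \<Rightarrow> real) \<Rightarrow> ereal" where
  "psi2_norm M Y = Inf (ereal ` {t. 0 < t \<and> (\<integral>\<^sup>+ x. ennreal (exp ((Y x)\<^sup>2 / t\<^sup>2)) \<partial>M) \<le> 2})"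

definition assumption_ABC :: "nat \<Rightarrow> nat \<Rightarrow> real \<Rightarrow> real \<Rightarrow> data measure \<Rightarrow> bool" where
  "assumption_ABC n p w u P \<longleftrightarrow>
     prob_space P \<and> sets P = sets borel \<and>
     \<comment> \<open>(A) independence and mean zero\<close>
     prob_space.indep_vars P (\<lambda>_. borel) (\<lambda>i X. X i) {1..n} \<and>
     (\<forall>i\<in>{1..n}. \<forall>j<p. integrable P (\<lambda>X. X i j) \<and> (\<integral>X. X i j \<partial>P) = 0) \<and>
     (\<forall>i\<in>{1..n}. \<forall>v\<in>unit_sphere p.
        integrable P (\<lambda>X. (inner_p p v (X i))\<^sup>2) \<and>
        \<comment> \<open>(B) continuous density bounded by w\<close>
        (\<exists>f::real \<Rightarrow> real. continuous_on UNIV f \<and> (\<forall>y. 0 \<le> f y \<and> f y \<le> w) \<and>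
           distributed P lborel
             (\<lambda>X. inner_p p v (X i) / sqrt (\<integral>Y. (inner_p p v (Y i))\<^sup>2 \<partial>P))
             (\<lambda>y. ennreal (f y))) \<and>
        \<comment> \<open>(C) sub-Gaussianity\<close>
        (psi2_norm P (\<lambda>X. inner_p p v (X i)))\<^sup>2
           \<le> ereal (u * (\<integral>X. (inner_p p v (X i))\<^sup>2 \<partial>P)))"

definition cov_mat :: "data measure \<Rightarrow> nat \<Rightarrow> mat" where
  "cov_mat P i = (\<lambda>j k. \<integral>X. (X i j - (\<integral>Y. Y i j \<partial>P)) * (X i k - (\<integral>Y. Y i k \<partial>P)) \<partial>P)"

definition null_model :: "nat \<Rightarrow> nat \<Rightarrow> real \<Rightarrow> real \<Rightarrow> data measure \<Rightarrow> bool" where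
  "null_model n p w u P \<longleftrightarrow> assumption_ABC n p w u P \<and>
     (\<exists>\<Sigma>. \<forall>i\<in>{1..n}. \<forall>j<p. \<forall>k<p. cov_mat P i j k = \<Sigma> j k)"

definition alt_model :: "nat \<Rightarrow> nat \<Rightarrow> real \<Rightarrow> real \<Rightarrow> nat \<Rightarrow> mat \<Rightarrow> mat \<Rightarrow> data measure \<Rightarrow> bool" where
  "alt_model n p w u t0 \<Sigma>1 \<Sigma>2 P \<longleftrightarrow> assumption_ABC n p w u P \<and>
     t0 \<in> {1..n - 1} \<and> pos_def_p p \<Sigma>1 \<and> pos_def_p p \<Sigma>2 \<and>
     (\<forall>i\<in>{1..n}. \<forall>j<p. \<forall>k<p.
        cov_mat P i j k = (if i \<le> t0 then \<Sigma>1 j k else \<Sigma>2 j k))"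

end

theory Submission
  imports Defs "HOL-Analysis.Harmonic_Numbers"
begin

text \<open>Under the null hypothesis every entry of \<open>Sigma_hat_1 X t - Sigma_hat_2 n X t\<close> is a
  centred average of \<open>2t\<close> independent sub-exponential products, so Bernstein's inequality and
  a union bound over the dyadic grid bound all entries by a multiple of
  \<open>\<sigma>\<^sup>2 max(\<surd>(g/t), g/t)\<close>, where \<open>\<sigma>\<^sup>2\<close> is the largest diagonal entry of the common
  covariance. The relaxation \<open>lam_hat_s p s\<close> of a matrix is at most \<open>s\<close> times its largest
  entry, and the anticoncentration assumption (B) keeps the scale estimate above a constant
  fraction of \<open>\<sigma>\<^sup>2\<close>; hence no statistic crosses its threshold.

  Under the alternative, take an \<open>s\<close>-sparse unit vector \<open>v\<close> whose quadratic form in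
  \<open>\<Sigma>\<^sub>1 - \<Sigma>\<^sub>2\<close> is at least half of \<open>lam_max_s p s (\<Sigma>\<^sub>1 - \<Sigma>\<^sub>2)\<close>, the dyadic \<open>t\<close> with
  \<open>t \<le> min t\<^sub>0 (n - t\<^sub>0) < 2t\<close> and the dyadic \<open>s'\<close> with \<open>s' \<le> s < 2s'\<close>. Bernstein's
  inequality for the projected sums shows that the quadratic form of
  \<open>Sigma_hat_1 X t - Sigma_hat_2 n X t\<close> in \<open>v\<close> is close to that of \<open>\<Sigma>\<^sub>1 - \<Sigma>\<^sub>2\<close>; the relaxation
  at level \<open>s'\<close> dominates it up to a factor 4; and by sub-Gaussianity (C) the scale estimate is
  at most a constant times \<open>max (lam_max_s p s \<Sigma>\<^sub>1) (lam_max_s p s \<Sigma>\<^sub>2)\<close>. The signal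
  condition then puts the statistic above its threshold.\<close>

section \<open>Rank-one matrices, the convex relaxation and sparse eigenvalues\<close>

definition rank_one :: "vec \<Rightarrow> mat" where
  "rank_one v = (\<lambda>j k. v j * v k)"

definition unit_vec :: "nat \<Rightarrow> vec" where
  "unit_vec j = (\<lambda>l. if l = j then 1 else 0)"

lemma sum_lessThan_delta: "j < (p::nat) \<Longrightarrow> (\<Sum>l<p. if l = j then (f l::real) else 0) = f j"
  by (subst sum.delta[where S="{..<p}" and a=j and b=f]) auto

lemma quad_form_rank_one: "quad_form p (rank_one v) x = (inner_p p v x)\<^sup>2"
  by (simp add: quad_form_def rank_one_def inner_p_def power2_eq_square sum_product
      sum_distrib_left sum_distrib_right mult_ac)

lemma trace_mult_rank_one: "trace_p p (mat_mult_p p A (rank_one v)) = quad_form p A v"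
  unfolding trace_p_def mat_mult_p_def quad_form_def rank_one_def
  by (intro sum.cong refl) (simp add: mult_ac)

lemma inner_unit_vec: "j < p \<Longrightarrow> inner_p p (unit_vec j) x = x j"
proof -
  assume "j < p"
  have e: "(\<lambda>l. unit_vec j l * x l) = (\<lambda>l. if l = j then x l else 0)"
    by (auto simp: unit_vec_def)
  show ?thesis unfolding inner_p_def e using \<open>j < p\<close> by (rule sum_lessThan_delta)
qed

lemma quad_form_unit_vec: "j < p \<Longrightarrow> quad_form p A (unit_vec j) = A j j"
proof -
  assume jp: "j < p"
  have row: "(\<lambda>l. unit_vec j k * A k l * unit_vec j l) = (\<lambda>l. if l = j then unit_vec j k * A k j else 0)"
    for k by (auto simp: unit_vec_def)
  have col: "(\<lambda>k. unit_vec j k * A k j) = (\<lambda>k. if k = j then A j j else 0)"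
    by (auto simp: unit_vec_def)
  have "quad_form p A (unit_vec j) = (\<Sum>k<p. unit_vec j k * A k j)"
    unfolding quad_form_def row using jp by (intro sum.cong refl) (rule sum_lessThan_delta)
  also have "\<dots> = A j j" unfolding col using jp sum_lessThan_delta[of j p "\<lambda>_. A j j"] by simp
  finally show ?thesis .
qed

lemma unit_vec_in_unit_sphere: "j < p \<Longrightarrow> unit_vec j \<in> unit_sphere p"
proof -
  assume "j < p"
  have e: "(\<lambda>l. (unit_vec j l)\<^sup>2) = (\<lambda>l. if l = j then 1 else 0)" by (auto simp: unit_vec_def)
  have "(\<Sum>l<p. (unit_vec j l)\<^sup>2) = 1"
    unfolding e using \<open>j < p\<close> sum_lessThan_delta[of j p "\<lambda>_. 1"] by simp
  with \<open>j < p\<close> show ?thesis by (simp add: unit_sphere_def unit_vec_def)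
qed

lemma unit_vec_in_sparse_sphere: "j < p \<Longrightarrow> 1 \<le> s \<Longrightarrow> unit_vec j \<in> sparse_sphere p s"
proof -
  assume "j < p" "1 \<le> s"
  then have "{l. l < p \<and> unit_vec j l \<noteq> 0} = {j}" by (auto simp: unit_vec_def)
  with \<open>j < p\<close> \<open>1 \<le> s\<close> show ?thesis by (simp add: sparse_sphere_def unit_vec_in_unit_sphere)
qed

lemma unit_sphere_abs_le_1: "v \<in> unit_sphere p \<Longrightarrow> j < p \<Longrightarrow> \<bar>v j\<bar> \<le> 1"
proof -
  assume v: "v \<in> unit_sphere p" and j: "j < p"
  have "(v j)\<^sup>2 \<le> (\<Sum>l<p. (v l)\<^sup>2)" using j by (intro member_le_sum) auto
  with v show ?thesis by (simp add: unit_sphere_def abs_square_le_1)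
qed

lemma psd_rank_one: "psd_p p (rank_one v)"
  by (simp add: psd_p_def symmetric_p_def rank_one_def quad_form_rank_one[unfolded rank_one_def]
      mult.commute)

lemma trace_rank_one: "v \<in> unit_sphere p \<Longrightarrow> trace_p p (rank_one v) = 1"
  by (simp add: unit_sphere_def trace_p_def rank_one_def power2_eq_square)

lemma entry_l1_rank_one_le:
  assumes "v \<in> sparse_sphere p s"
  shows "entry_l1_p p (rank_one v) \<le> real s"
proof -
  let ?S = "{j. j < p \<and> v j \<noteq> 0}"
  have "entry_l1_p p (rank_one v) = (\<Sum>j<p. \<bar>v j\<bar>)\<^sup>2"
    by (simp add: entry_l1_p_def rank_one_def abs_mult power2_eq_square sum_product)
  also have "(\<Sum>j<p. \<bar>v j\<bar>) = (\<Sum>j\<in>?S. \<bar>v j\<bar>)"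
    by (rule sum.mono_neutral_right) auto
  also have "(\<Sum>j\<in>?S. \<bar>v j\<bar>)\<^sup>2 \<le> (\<Sum>j\<in>?S. \<bar>v j\<bar>\<^sup>2) * real (card ?S)"
    by (rule sum_squared_le_sum_of_squares)
  also have "(\<Sum>j\<in>?S. \<bar>v j\<bar>\<^sup>2) = (\<Sum>j<p. (v j)\<^sup>2)"
    by simp (rule sum.mono_neutral_left, auto)
  finally show ?thesis using assms by (simp add: sparse_sphere_def unit_sphere_def)
qed

lemma rank_one_in_N_set: "v \<in> sparse_sphere p s \<Longrightarrow> real s \<le> s' \<Longrightarrow> rank_one v \<in> N_set p s'"
  using entry_l1_rank_one_le[of v p s] psd_rank_one[of p v] trace_rank_one[of v p]
  by (auto simp: N_set_def sparse_sphere_def)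

lemma abs_trace_mult_le:
  assumes "\<forall>j<p. \<forall>k<p. \<bar>A j k\<bar> \<le> c"
  shows "\<bar>trace_p p (mat_mult_p p A Z)\<bar> \<le> c * entry_l1_p p Z"
proof -
  have "\<bar>trace_p p (mat_mult_p p A Z)\<bar> \<le> (\<Sum>j<p. \<Sum>l<p. \<bar>A j l * Z l j\<bar>)"
    unfolding trace_p_def mat_mult_p_def
    by (rule order.trans[OF sum_abs]) (intro sum_mono sum_abs)
  also have "\<dots> \<le> (\<Sum>j<p. \<Sum>l<p. c * \<bar>Z l j\<bar>)"
    using assms by (intro sum_mono) (simp add: abs_mult mult_right_mono)
  also have "\<dots> = c * (\<Sum>j<p. \<Sum>l<p. \<bar>Z l j\<bar>)"
    by (simp add: sum_distrib_left)
  also have "\<dots> = c * (\<Sum>l<p. \<Sum>j<p. \<bar>Z l j\<bar>)"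
    by (subst sum.swap) (rule refl)
  finally show ?thesis by (simp add: entry_l1_p_def)
qed

lemma lam_hat_s_le:
  assumes "1 \<le> p" "1 \<le> s" "\<forall>j<p. \<forall>k<p. \<bar>A j k\<bar> \<le> c"
  shows "lam_hat_s p s A \<le> real s * c"
  unfolding lam_hat_s_def
proof (rule cSUP_least)
  show "N_set p (real s) \<noteq> {}"
    using rank_one_in_N_set[OF unit_vec_in_sparse_sphere[of 0 p 1], of "real s"] assms by auto
next
  have "\<bar>A 0 0\<bar> \<le> c" using assms(1,3) by simp
  then have c: "0 \<le> c" by (rule order_trans[OF abs_ge_zero])
  fix Z assume "Z \<in> N_set p (real s)"
  then have "entry_l1_p p Z \<le> real s" by (simp add: N_set_def)
  with c have "c * entry_l1_p p Z \<le> real s * c" by (simp add: mult.commute mult_left_mono)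
  then show "\<bar>trace_p p (mat_mult_p p A Z)\<bar> \<le> real s * c"
    using abs_trace_mult_le[OF assms(3), of Z] by linarith
qed

lemma abs_trace_mult_le_lam_hat_s:
  assumes "Z \<in> N_set p (real s)"
  shows "\<bar>trace_p p (mat_mult_p p A Z)\<bar> \<le> lam_hat_s p s A"
proof -
  let ?c = "\<Sum>j<p. \<Sum>k<p. \<bar>A j k\<bar>"
  have "\<bar>A j k\<bar> \<le> ?c" if "j < p" "k < p" for j k
  proof -
    have "\<bar>A j k\<bar> \<le> (\<Sum>k<p. \<bar>A j k\<bar>)" using that by (intro member_le_sum) auto
    also have "\<dots> \<le> ?c" using that
      by (intro member_le_sum[where f="\<lambda>j. \<Sum>k<p. \<bar>A j k\<bar>"]) (auto intro: sum_nonneg)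
    finally show ?thesis .
  qed
  then have "bdd_above ((\<lambda>Z. \<bar>trace_p p (mat_mult_p p A Z)\<bar>) ` N_set p (real s))"
    using abs_trace_mult_le[of p A ?c]
    by (intro bdd_aboveI[where M="?c * real s"])
      (auto simp: N_set_def intro: order.trans[OF _ mult_left_mono] sum_nonneg)
  then show ?thesis unfolding lam_hat_s_def using assms by (rule cSUP_upper2) simp
qed

lemma abs_diag_le_lam_hat_s:
  assumes "1 \<le> s" "j < p"
  shows "\<bar>A j j\<bar> \<le> lam_hat_s p s A"
  using abs_trace_mult_le_lam_hat_s[OF rank_one_in_N_set[OF unit_vec_in_sparse_sphere[of j p 1]], of s A]
    assms by (simp add: trace_mult_rank_one quad_form_unit_vec)

text \<open>The relaxation at sparsity level \<open>s'\<close> still controls \<open>s\<close>-sparse quadratic forms when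
  \<open>s < 2 s'\<close>: averaging \<open>v v\<^sup>T\<close> with \<open>e\<^sub>0 e\<^sub>0\<^sup>T\<close> halves the entrywise \<open>\<ell>\<^sub>1\<close> norm.\<close>

definition rank_one_avg :: "vec \<Rightarrow> mat" where
  "rank_one_avg v = (\<lambda>j k. (rank_one v j k + rank_one (unit_vec 0) j k) / 2)"

lemma rank_one_avg_in_N_set:
  assumes "1 \<le> p" "v \<in> sparse_sphere p s" "real s + 1 \<le> 2 * s'"
  shows "rank_one_avg v \<in> N_set p s'"
proof -
  have e0: "unit_vec 0 \<in> sparse_sphere p 1" using assms(1) by (simp add: unit_vec_in_sparse_sphere)
  have qf: "quad_form p (rank_one_avg v) x =
      (quad_form p (rank_one v) x + quad_form p (rank_one (unit_vec 0)) x) / 2" for x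
    by (simp add: quad_form_def rank_one_avg_def sum_divide_distrib[symmetric] sum.distrib
        distrib_left distrib_right)
  have "0 \<le> quad_form p (rank_one_avg v) x" for x
    using psd_rank_one[of p v] psd_rank_one[of p "unit_vec 0"] unfolding qf psd_p_def by simp
  then have "psd_p p (rank_one_avg v)"
    by (simp add: psd_p_def symmetric_p_def rank_one_avg_def rank_one_def mult.commute)
  moreover have "trace_p p (rank_one_avg v) = 1"
    using trace_rank_one[of v p] trace_rank_one[of "unit_vec 0" p] assms(2) e0
    unfolding trace_p_def rank_one_avg_def
    by (simp add: sum.distrib sum_divide_distrib[symmetric] sparse_sphere_def)
  moreover have "entry_l1_p p (rank_one_avg v) \<le> s'"
  proof -
    have "entry_l1_p p (rank_one_avg v) \<le>
        (\<Sum>j<p. \<Sum>k<p. (\<bar>rank_one v j k\<bar> + \<bar>rank_one (unit_vec 0) j k\<bar>) / 2)"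
      unfolding entry_l1_p_def rank_one_avg_def by (intro sum_mono) (simp add: abs_triangle_ineq)
    also have "\<dots> = (entry_l1_p p (rank_one v) + entry_l1_p p (rank_one (unit_vec 0))) / 2"
      unfolding entry_l1_p_def by (simp add: sum.distrib sum_divide_distrib[symmetric])
    also have "\<dots> \<le> (real s + 1) / 2"
      using entry_l1_rank_one_le[OF assms(2)] entry_l1_rank_one_le[OF e0] by simp
    finally show ?thesis using assms(3) by simp
  qed
  ultimately show ?thesis by (simp add: N_set_def)
qed

lemma abs_quad_form_le_lam_hat_s:
  assumes "1 \<le> p" "v \<in> sparse_sphere p s" "real s + 1 \<le> 2 * real s'" "1 \<le> s'"
  shows "\<bar>quad_form p A v\<bar> \<le> 4 * lam_hat_s p s' A"
proof -
  have "trace_p p (mat_mult_p p A (rank_one_avg v)) =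
      (trace_p p (mat_mult_p p A (rank_one v)) + trace_p p (mat_mult_p p A (rank_one (unit_vec 0)))) / 2"
    unfolding trace_p_def mat_mult_p_def rank_one_avg_def
    by (simp add: sum.distrib sum_divide_distrib[symmetric] distrib_left)
  then have "trace_p p (mat_mult_p p A (rank_one_avg v)) = (quad_form p A v + A 0 0) / 2"
    using assms(1) by (simp add: trace_mult_rank_one quad_form_unit_vec)
  moreover have "\<bar>trace_p p (mat_mult_p p A (rank_one_avg v))\<bar> \<le> lam_hat_s p s' A"
    by (rule abs_trace_mult_le_lam_hat_s[OF rank_one_avg_in_N_set[OF assms(1-3)]])
  moreover have "\<bar>A 0 0\<bar> \<le> lam_hat_s p s' A"
    using abs_diag_le_lam_hat_s[OF assms(4), of 0 p A] assms(1) by simp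
  ultimately show ?thesis by (simp add: abs_if split: if_splits)
qed

lemma abs_quad_form_le_entry_sum:
  assumes "v \<in> unit_sphere p"
  shows "\<bar>quad_form p A v\<bar> \<le> (\<Sum>j<p. \<Sum>k<p. \<bar>A j k\<bar>)"
  unfolding quad_form_def
proof (rule order.trans[OF sum_abs], intro sum_mono order.trans[OF sum_abs])
  fix j k assume "j \<in> {..<p}" "k \<in> {..<p}"
  then have "\<bar>v j\<bar> \<le> 1" "\<bar>v k\<bar> \<le> 1" using unit_sphere_abs_le_1[OF assms] by auto
  then have "\<bar>v j\<bar> * \<bar>A j k\<bar> * \<bar>v k\<bar> \<le> 1 * \<bar>A j k\<bar> * 1"
    by (intro mult_mono) (auto intro: mult_le_one)
  then show "\<bar>v j * A j k * v k\<bar> \<le> \<bar>A j k\<bar>" by (simp add: abs_mult)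
qed

lemma abs_quad_form_le_lam_max_s: "v \<in> sparse_sphere p s \<Longrightarrow> \<bar>quad_form p A v\<bar> \<le> lam_max_s p s A"
  unfolding lam_max_s_def
  by (rule cSUP_upper, assumption, rule bdd_aboveI[where M="\<Sum>j<p. \<Sum>k<p. \<bar>A j k\<bar>"])
     (auto simp: sparse_sphere_def intro: abs_quad_form_le_entry_sum)

lemma abs_diag_le_lam_max_s: "j < p \<Longrightarrow> 1 \<le> s \<Longrightarrow> \<bar>A j j\<bar> \<le> lam_max_s p s A"
  using abs_quad_form_le_lam_max_s[OF unit_vec_in_sparse_sphere, of j p s A]
  by (simp add: quad_form_unit_vec)

lemma lam_max_s_le:
  assumes "1 \<le> p" "1 \<le> s" "\<And>v. v \<in> sparse_sphere p s \<Longrightarrow> \<bar>quad_form p A v\<bar> \<le> c"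
  shows "lam_max_s p s A \<le> c"
  unfolding lam_max_s_def
  by (rule cSUP_least) (use unit_vec_in_sparse_sphere[of 0 p s] assms in auto)

lemma lam_max_s_half_attained:
  assumes "1 \<le> p" "1 \<le> s" "0 < lam_max_s p s A"
  obtains v where "v \<in> sparse_sphere p s" "lam_max_s p s A / 2 < \<bar>quad_form p A v\<bar>"
proof -
  have "\<not> lam_max_s p s A \<le> lam_max_s p s A / 2" using assms(3) by simp
  then show ?thesis using lam_max_s_le[OF assms(1,2)] that by (meson not_le)
qed

lemma quad_form_diff:
  "quad_form p (\<lambda>j k. A j k - B j k) v = quad_form p A v - quad_form p B v"
  by (simp add: quad_form_def sum_subtractf[symmetric] algebra_simps)

lemma quad_form_nonneg_if_pos_def: "pos_def_p p A \<Longrightarrow> 0 \<le> quad_form p A v"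
  by (cases "\<exists>j<p. v j \<noteq> 0") (auto simp: pos_def_p_def quad_form_def intro: less_imp_le)

lemma lam_max_s_diff_le_max:
  assumes "1 \<le> p" "1 \<le> s" "pos_def_p p S1" "pos_def_p p S2"
  shows "lam_max_s p s (\<lambda>j k. S1 j k - S2 j k) \<le> max (lam_max_s p s S1) (lam_max_s p s S2)"
proof (rule lam_max_s_le[OF assms(1,2)])
  fix v assume v: "v \<in> sparse_sphere p s"
  have "0 \<le> quad_form p S1 v" "0 \<le> quad_form p S2 v"
    using quad_form_nonneg_if_pos_def assms by auto
  moreover have "\<bar>quad_form p S1 v\<bar> \<le> lam_max_s p s S1" "\<bar>quad_form p S2 v\<bar> \<le> lam_max_s p s S2"
    using abs_quad_form_le_lam_max_s[OF v] by auto
  ultimately show "\<bar>quad_form p (\<lambda>j k. S1 j k - S2 j k) v\<bar> \<le> max (lam_max_s p s S1) (lam_max_s p s S2)"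
    unfolding quad_form_diff by (simp add: abs_if max_def split: if_splits)
qed

lemma lam_max_s_pos:
  assumes "1 \<le> p" "1 \<le> s" "pos_def_p p S"
  shows "0 < lam_max_s p s S"
proof -
  have "0 < quad_form p S (unit_vec 0)"
    using assms(1,3) unfolding pos_def_p_def by (auto simp: unit_vec_def intro!: exI[of _ 0])
  then show ?thesis
    using abs_diag_le_lam_max_s[of 0 p s S] assms by (simp add: quad_form_unit_vec)
qed

section \<open>Empirical covariances\<close>

lemma abs_mult_le_half_sum_sq: "\<bar>(a::real) * b\<bar> \<le> (a\<^sup>2 + b\<^sup>2) / 2"
  using sum_squares_bound[of "\<bar>a\<bar>" "\<bar>b\<bar>"] by (simp add: abs_mult power2_eq_square)

lemma quad_form_sum:
  "quad_form p (\<lambda>j k. \<Sum>i\<in>I. M i j k) v = (\<Sum>i\<in>I. quad_form p (M i) v)"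
proof -
  have "quad_form p (\<lambda>j k. \<Sum>i\<in>I. M i j k) v = (\<Sum>j<p. \<Sum>k<p. \<Sum>i\<in>I. v j * M i j k * v k)"
    unfolding quad_form_def by (simp add: sum_distrib_left sum_distrib_right)
  also have "\<dots> = (\<Sum>j<p. \<Sum>i\<in>I. \<Sum>k<p. v j * M i j k * v k)"
    by (intro sum.cong refl) (rule sum.swap)
  also have "\<dots> = (\<Sum>i\<in>I. \<Sum>j<p. \<Sum>k<p. v j * M i j k * v k)"
    by (rule sum.swap)
  finally show ?thesis by (simp add: quad_form_def)
qed

lemma quad_form_scale: "quad_form p (\<lambda>j k. c * M j k) v = c * quad_form p M v"
  by (simp add: quad_form_def sum_distrib_left mult_ac)

lemma Sigma_hat_2_eq_reversed: "Sigma_hat_2 n X t = Sigma_hat_1 (\<lambda>i. X (n - i + 1)) t"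
  by (simp add: Sigma_hat_1_def Sigma_hat_2_def)

lemma quad_form_Sigma_hat_1:
  "quad_form p (Sigma_hat_1 X t) v = (1 / real t) * (\<Sum>i\<in>{1..t}. (inner_p p v (X i))\<^sup>2)"
proof -
  have "Sigma_hat_1 X t = (\<lambda>j k. (1 / real t) * (\<Sum>i\<in>{1..t}. rank_one (X i) j k))"
    by (simp add: Sigma_hat_1_def rank_one_def)
  then show ?thesis
    by (simp only: quad_form_scale quad_form_sum quad_form_rank_one)
       (simp add: inner_p_def mult.commute)
qed

lemma sum_reverse_index:
  fixes t n :: nat
  assumes "t \<le> n"
  shows "(\<Sum>i\<in>{1..t}. f (n - i + 1)) = (\<Sum>i\<in>{n - t + 1..n}. (f i :: real))"
  by (rule sum.reindex_bij_witness[where i="\<lambda>i. n - i + 1" and j="\<lambda>i. n - i + 1"])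
     (use assms in auto)

lemma abs_Sigma_hat_1_le_diag:
  "\<bar>Sigma_hat_1 X t j k\<bar> \<le> (Sigma_hat_1 X t j j + Sigma_hat_1 X t k k) / 2"
proof -
  have "\<bar>\<Sum>i\<in>{1..t}. X i j * X i k\<bar> \<le> (\<Sum>i\<in>{1..t}. ((X i j)\<^sup>2 + (X i k)\<^sup>2) / 2)"
    by (intro order.trans[OF sum_abs] sum_mono abs_mult_le_half_sum_sq)
  then have "\<bar>\<Sum>i\<in>{1..t}. X i j * X i k\<bar> * 2 \<le>
      (\<Sum>i\<in>{1..t}. (X i j)\<^sup>2) + (\<Sum>i\<in>{1..t}. (X i k)\<^sup>2)"
    by (simp add: sum.distrib sum_divide_distrib[symmetric])
  then have "\<bar>\<Sum>i\<in>{1..t}. X i j * X i k\<bar> / real t \<le>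
      ((\<Sum>i\<in>{1..t}. (X i j)\<^sup>2) + (\<Sum>i\<in>{1..t}. (X i k)\<^sup>2)) / (real t * 2)"
    by (cases "t = 0") (simp_all add: field_simps)
  then show ?thesis by (simp add: Sigma_hat_1_def abs_mult power2_eq_square add_divide_distrib)
qed

lemma Sigma_hat_diff_eq_signed_sum:
  assumes "2 * t \<le> n"
  shows "real t * (Sigma_hat_1 X t j k - Sigma_hat_2 n X t j k) =
     (\<Sum>i\<in>{1..t} \<union> {n - t + 1..n}. (if i \<le> t then 1 else -1) * (X i j * X i k))"
proof -
  let ?f = "\<lambda>i. (if i \<le> t then 1 else -1) * (X i j * X i k)"
  have "{1..t} \<inter> {n - t + 1..n} = {}" using assms by auto
  then have "(\<Sum>i\<in>{1..t} \<union> {n - t + 1..n}. ?f i) = (\<Sum>i\<in>{1..t}. ?f i) + (\<Sum>i\<in>{n - t + 1..n}. ?f i)"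
    by (rule sum.union_disjoint[rotated 2]) auto
  also have "(\<Sum>i\<in>{1..t}. ?f i) = (\<Sum>i\<in>{1..t}. X i j * X i k)"
    by (intro sum.cong refl) auto
  also have "(\<Sum>i\<in>{n - t + 1..n}. ?f i) = - (\<Sum>i\<in>{n - t + 1..n}. X i j * X i k)"
    using assms by (simp add: sum_negf[symmetric]) (intro sum.cong refl, auto)
  also have "(\<Sum>i\<in>{n - t + 1..n}. X i j * X i k) = (\<Sum>i\<in>{1..t}. X (n - i + 1) j * X (n - i + 1) k)"
    using assms by (subst sum_reverse_index[where f="\<lambda>i. X i j * X i k"]) auto
  finally show ?thesis
    by (cases "t = 0") (simp_all add: Sigma_hat_1_def Sigma_hat_2_def right_diff_distrib)
qed

lemma quad_form_Sigma_hat_diff: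
  assumes "t \<le> n"
  shows "quad_form p (\<lambda>j k. Sigma_hat_1 X t j k - Sigma_hat_2 n X t j k) v =
    ((\<Sum>i\<in>{1..t}. (inner_p p v (X i))\<^sup>2) - (\<Sum>i\<in>{n - t + 1..n}. (inner_p p v (X i))\<^sup>2)) / real t"
  using sum_reverse_index[OF assms, of "\<lambda>i. (inner_p p v (X i))\<^sup>2"]
  by (simp add: quad_form_diff quad_form_Sigma_hat_1 Sigma_hat_2_eq_reversed diff_divide_distrib)

lemma quad_form_Sigma_hat_diff_close:
  assumes t: "1 \<le> t" "t \<le> n"
    and S1: "\<bar>(\<Sum>i\<in>{1..t}. (inner_p p v (X i))\<^sup>2) - real t * a1\<bar> < c * sqrt (real t)"
    and S2: "\<bar>(\<Sum>i\<in>{n - t + 1..n}. (inner_p p v (X i))\<^sup>2) - real t * a2\<bar> < c * sqrt (real t)"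
  shows "\<bar>quad_form p (\<lambda>j k. Sigma_hat_1 X t j k - Sigma_hat_2 n X t j k) v - (a1 - a2)\<bar>
    < 2 * c / sqrt (real t)"
proof -
  define d where "d = quad_form p (\<lambda>j k. Sigma_hat_1 X t j k - Sigma_hat_2 n X t j k) v - (a1 - a2)"
  define e1 where "e1 = (\<Sum>i\<in>{1..t}. (inner_p p v (X i))\<^sup>2) - real t * a1"
  define e2 where "e2 = (\<Sum>i\<in>{n - t + 1..n}. (inner_p p v (X i))\<^sup>2) - real t * a2"
  have t0: "0 < real t" using t by simp
  have "real t * d = e1 - e2"
    unfolding d_def e1_def e2_def using quad_form_Sigma_hat_diff[OF t(2), of p X v] t0
    by (simp add: field_simps)
  then have "real t * \<bar>d\<bar> = \<bar>e1 - e2\<bar>" by (metis abs_mult abs_of_nat)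
  also have "\<dots> \<le> \<bar>e1\<bar> + \<bar>e2\<bar>" by (rule abs_triangle_ineq4)
  also have "\<dots> < 2 * c * sqrt (real t)" using S1 S2 by (simp add: e1_def e2_def)
  also have "\<dots> = real t * (2 * c / sqrt (real t))"
    using t0 real_sqrt_mult_self[of "real t"] by (simp add: field_simps)
  finally have "real t * \<bar>d\<bar> < real t * (2 * c / sqrt (real t))" .
  then show ?thesis unfolding d_def[symmetric] using mult_less_cancel_left_pos[OF t0] by blast
qed

section \<open>Chernoff and Bernstein bounds\<close>

lemma exp_le_second_order: "exp (y::real) \<le> 1 + y + y\<^sup>2 * exp \<bar>y\<bar>"
proof (cases "y \<ge> 0")
  case True
  have "exp y * (1 - y) \<le> 1"
    using mult_left_mono[OF exp_ge_add_one_self[of "-y"], of "exp y"] by (simp add: exp_minus field_simps)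
  then have e1: "exp y - 1 \<le> y * exp y" by (simp add: algebra_simps)
  have "exp y - 1 - y \<le> y * (exp y - 1)" using e1 by (simp add: algebra_simps)
  also have "\<dots> \<le> y * (y * exp y)" using e1 True by (intro mult_left_mono) auto
  finally show ?thesis using True by (simp add: power2_eq_square)
next
  case False
  define a where "a = - y"
  have a0: "a > 0" using False by (simp add: a_def)
  have "exp (-a) * (1 + a) \<le> 1"
    using mult_left_mono[OF exp_ge_add_one_self[of a], of "exp (-a)"] by (simp add: exp_minus field_simps)
  then have "exp (-a) - 1 + a \<le> a * (1 - exp (-a))" by (simp add: algebra_simps)
  also have "\<dots> \<le> a * a" using exp_ge_add_one_self[of "-a"] a0 by (intro mult_left_mono) auto
  also have "\<dots> \<le> a * a * exp a" using a0 by simp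
  finally show ?thesis using a0 by (simp add: a_def power2_eq_square)
qed

lemma sq_le_exp: assumes "(z::real) \<ge> 0" shows "z\<^sup>2 \<le> 64 * exp (3 * z / 8)"
proof -
  have "z \<le> 8 * exp (3 * z / 16)"
    using exp_ge_add_one_self[of "3 * z / 16"] assms by linarith
  then have "z\<^sup>2 \<le> (8 * exp (3 * z / 16))\<^sup>2" using assms by (intro power_mono) auto
  also have "\<dots> = 64 * exp (3 * z / 8)"
    by (simp add: power2_eq_square exp_add[symmetric])
  finally show ?thesis .
qed

lemma exp_centered_le:
  fixes K \<theta> \<mu> x :: real
  assumes K: "K > 0" and \<mu>: "\<bar>\<mu>\<bar> \<le> 2 * K" and \<theta>: "\<bar>\<theta>\<bar> * K \<le> 1 / 8"
  shows "exp (\<theta> * (x - \<mu>)) \<le> 1 + \<theta> * (x - \<mu>) + 64 * exp 1 * \<theta>\<^sup>2 * K\<^sup>2 * exp (\<bar>x\<bar> / K)"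
proof -
  define y where "y = \<theta> * (x - \<mu>)"
  define z where "z = \<bar>x - \<mu>\<bar> / K"
  have z0: "z \<ge> 0" using K by (simp add: z_def)
  have ay: "\<bar>y\<bar> = \<bar>\<theta>\<bar> * K * z" using K by (simp add: y_def z_def abs_mult)
  have y8: "\<bar>y\<bar> \<le> z / 8" unfolding ay using mult_right_mono[OF \<theta> z0] by simp
  have ez: "exp (z / 2) \<le> exp 1 * exp (\<bar>x\<bar> / K)"
  proof -
    have "z \<le> \<bar>x\<bar> / K + 2" using \<mu> K by (simp add: z_def field_simps)
    then have "z / 2 \<le> 1 + \<bar>x\<bar> / K" using K by (simp add: field_simps)
    then show ?thesis by (simp add: exp_add[symmetric])
  qed
  have "y\<^sup>2 = \<theta>\<^sup>2 * K\<^sup>2 * z\<^sup>2" using ay by (metis power2_abs power_mult_distrib)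
  then have "y\<^sup>2 * exp \<bar>y\<bar> \<le> \<theta>\<^sup>2 * K\<^sup>2 * (64 * exp (3 * z / 8)) * exp (z / 8)"
    using sq_le_exp[OF z0] y8 by (intro mult_mono) (auto intro: mult_left_mono)
  also have "\<dots> = 64 * \<theta>\<^sup>2 * K\<^sup>2 * exp (z / 2)"
    by (simp add: exp_add[symmetric] mult_ac)
  also have "\<dots> \<le> 64 * \<theta>\<^sup>2 * K\<^sup>2 * (exp 1 * exp (\<bar>x\<bar> / K))"
    using ez by (intro mult_left_mono) auto
  finally have "y\<^sup>2 * exp \<bar>y\<bar> \<le> 64 * exp 1 * \<theta>\<^sup>2 * K\<^sup>2 * exp (\<bar>x\<bar> / K)"
    by (simp add: mult_ac)
  then show ?thesis using exp_le_second_order[of y] by (simp add: y_def)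
qed

lemma integral_indicator_like_le_measure:
  assumes "prob_space M" "B \<in> sets M" "\<And>x. x \<in> space M \<Longrightarrow> f x = 0 \<or> f x = 1"
    and "\<And>x. x \<in> space M \<Longrightarrow> x \<notin> B \<Longrightarrow> f x = 0"
  shows "(\<integral>x. f x \<partial>M) \<le> measure M B"
proof (cases "integrable M f")
  case True
  interpret prob_space M by fact
  have "f x \<le> indicator B x" if "x \<in> space M" for x
    using assms(3,4)[OF that] by (cases "x \<in> B") auto
  then have "(\<integral>x. f x \<partial>M) \<le> (\<integral>x. indicator B x \<partial>M)"
    using assms by (intro integral_mono True integrable_real_indicator)
      (auto simp: less_top[symmetric])
  also have "\<dots> = measure M B" using assms by simp
  finally show ?thesis .
qed (simp add: not_integrable_integral_eq)

context prob_space
begin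

lemma indep_sum_Chernoff:
  fixes W :: "'i \<Rightarrow> 'a \<Rightarrow> real"
  assumes fin: "finite I" and ind: "indep_vars (\<lambda>_. borel) W I"
    and s: "s > 0" and int: "\<And>i. i \<in> I \<Longrightarrow> integrable M (\<lambda>x. exp (s * W i x))"
  shows "prob {x\<in>space M. a \<le> (\<Sum>i\<in>I. W i x)} \<le> exp (- s * a) * (\<Prod>i\<in>I. \<integral>x. exp (s * W i x) \<partial>M)"
proof -
  have ind_exp: "indep_vars (\<lambda>_. borel) (\<lambda>i x. exp (s * W i x)) I"
    by (rule indep_vars_compose2[OF ind]) simp
  have e: "(\<lambda>x. exp (s * (\<Sum>i\<in>I. W i x))) = (\<lambda>x. \<Prod>i\<in>I. exp (s * W i x))"
    by (simp add: sum_distrib_left exp_sum fin)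
  have int_sum: "integrable M (\<lambda>x. exp (s * (\<Sum>i\<in>I. W i x)))"
    unfolding e by (rule indep_vars_integrable[OF fin ind_exp int])
  have "prob {x\<in>space M. a \<le> (\<Sum>i\<in>I. W i x)} \<le>
     exp (- s * a) * (\<integral>x\<in>space M. exp (s * (\<Sum>i\<in>I. W i x)) \<partial>M)"
  proof (rule Chernoff_ineq_ge[OF s _ sets.top])
    show "set_integrable M (space M) (\<lambda>x. exp (s * (\<Sum>i\<in>I. W i x)))"
      unfolding set_integrable_def
      by (rule Bochner_Integration.integrable_cong[THEN iffD1, OF refl _ int_sum]) simp
  qed
  also have "(\<integral>x\<in>space M. exp (s * (\<Sum>i\<in>I. W i x)) \<partial>M) = (\<Prod>i\<in>I. \<integral>x. exp (s * W i x) \<partial>M)"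
    using set_integral_space[OF int_sum] indep_vars_lebesgue_integral[OF fin ind_exp int]
    unfolding e by simp
  finally show ?thesis .
qed

lemma centered_mgf_le_subexp:
  fixes W :: "'a \<Rightarrow> real"
  assumes meas: "W \<in> borel_measurable M" and K: "K > 0"
    and int_exp: "integrable M (\<lambda>x. exp (\<bar>W x\<bar> / K))" and E2: "(\<integral>x. exp (\<bar>W x\<bar> / K) \<partial>M) \<le> 2"
    and \<theta>: "\<bar>\<theta>\<bar> * K \<le> 1 / 8"
  shows "integrable M (\<lambda>x. exp (\<theta> * (W x - expectation W)))"
    and "(\<integral>x. exp (\<theta> * (W x - expectation W)) \<partial>M) \<le> exp (400 * \<theta>\<^sup>2 * K\<^sup>2)"
proof -
  have W_le: "\<bar>W x\<bar> \<le> K * exp (\<bar>W x\<bar> / K)" for x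
    using exp_ge_add_one_self[of "\<bar>W x\<bar> / K"] K by (simp add: field_simps)
  have intK: "integrable M (\<lambda>x. K * exp (\<bar>W x\<bar> / K))" using int_exp by simp
  have intW: "integrable M W"
    by (rule Bochner_Integration.integrable_bound[OF intK meas]) (use W_le K in auto)
  define \<mu> where "\<mu> = expectation W"
  have "\<bar>\<mu>\<bar> \<le> (\<integral>y. K * exp (\<bar>W y\<bar> / K) \<partial>M)"
    unfolding \<mu>_def by (rule order.trans[OF integral_abs_bound integral_mono]) (use intK intW W_le in auto)
  also have "\<dots> \<le> 2 * K" using E2 K by simp
  finally have \<mu>: "\<bar>\<mu>\<bar> \<le> 2 * K" .
  define c where "c = 64 * exp 1 * \<theta>\<^sup>2 * K\<^sup>2"
  define g where "g x = 1 + \<theta> * (W x - \<mu>) + c * exp (\<bar>W x\<bar> / K)" for x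
  have pt: "exp (\<theta> * (W x - \<mu>)) \<le> g x" for x
    unfolding g_def c_def by (rule exp_centered_le[OF K \<mu> \<theta>])
  have intg: "integrable M g" unfolding g_def using intW int_exp by auto
  show int: "integrable M (\<lambda>x. exp (\<theta> * (W x - expectation W)))"
    unfolding \<mu>_def[symmetric]
    by (rule Bochner_Integration.integrable_bound[OF intg])
      (use meas pt in \<open>auto intro: order.trans[OF _ abs_ge_self]\<close>)
  have "(\<integral>x. exp (\<theta> * (W x - \<mu>)) \<partial>M) \<le> (\<integral>x. g x \<partial>M)"
    by (intro integral_mono intg) (use int[unfolded \<mu>_def[symmetric]] pt in auto)
  also have "(\<integral>x. g x \<partial>M) = 1 + c * (\<integral>x. exp (\<bar>W x\<bar> / K) \<partial>M)"
    unfolding g_def using intW int_exp by (simp add: prob_space \<mu>_def)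
  also have "\<dots> \<le> 1 + 128 * exp 1 * \<theta>\<^sup>2 * K\<^sup>2"
    using mult_left_mono[OF E2, of c] by (simp add: c_def)
  also have "\<dots> \<le> 1 + 400 * \<theta>\<^sup>2 * K\<^sup>2"
  proof -
    have "128 * exp 1 * (\<theta>\<^sup>2 * K\<^sup>2) \<le> 400 * (\<theta>\<^sup>2 * K\<^sup>2)"
      using exp_le by (intro mult_right_mono) auto
    then show ?thesis by (simp add: mult_ac)
  qed
  also have "\<dots> \<le> exp (400 * \<theta>\<^sup>2 * K\<^sup>2)" by (rule exp_ge_add_one_self)
  finally show "(\<integral>x. exp (\<theta> * (W x - expectation W)) \<partial>M) \<le> exp (400 * \<theta>\<^sup>2 * K\<^sup>2)"
    by (simp add: \<mu>_def)
qed

lemma Bernstein_one_sided: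
  fixes W :: "'i \<Rightarrow> 'a \<Rightarrow> real"
  assumes fin: "finite I" and ind: "indep_vars (\<lambda>_. borel) W I" and K: "K > 0"
    and int_exp: "\<And>i. i \<in> I \<Longrightarrow> integrable M (\<lambda>x. exp (\<bar>W i x\<bar> / K))"
    and E2: "\<And>i. i \<in> I \<Longrightarrow> (\<integral>x. exp (\<bar>W i x\<bar> / K) \<partial>M) \<le> 2"
    and \<theta>: "\<theta> > 0" "\<theta> * K \<le> 1 / 8" and \<sigma>: "\<bar>\<sigma>\<bar> = 1"
  shows "prob {x\<in>space M. a \<le> (\<Sum>i\<in>I. \<sigma> * (W i x - expectation (W i)))}
     \<le> exp (- \<theta> * a + 400 * real (card I) * \<theta>\<^sup>2 * K\<^sup>2)"
proof -
  let ?V = "\<lambda>i x. \<sigma> * (W i x - expectation (W i))"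
  have ind_V: "indep_vars (\<lambda>_. borel) ?V I"
    by (rule indep_vars_compose2[OF ind]) simp
  have "\<sigma>\<^sup>2 = 1" using \<sigma> by (metis power2_abs power_one)
  then have mgf: "integrable M (\<lambda>x. exp (\<theta> * ?V i x))"
      "(\<integral>x. exp (\<theta> * ?V i x) \<partial>M) \<le> exp (400 * \<theta>\<^sup>2 * K\<^sup>2)" if "i \<in> I" for i
    using centered_mgf_le_subexp[of "W i" K "\<theta> * \<sigma>"] ind that int_exp E2 K \<theta> \<sigma>
    by (auto simp: indep_vars_def abs_mult power_mult_distrib mult.assoc)
  have "prob {x\<in>space M. a \<le> (\<Sum>i\<in>I. ?V i x)} \<le> exp (- \<theta> * a) * (\<Prod>i\<in>I. \<integral>x. exp (\<theta> * ?V i x) \<partial>M)"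
    by (rule indep_sum_Chernoff[OF fin ind_V \<theta>(1) mgf(1)])
  also have "\<dots> \<le> exp (- \<theta> * a) * (\<Prod>i\<in>I. exp (400 * \<theta>\<^sup>2 * K\<^sup>2))"
    using mgf by (intro mult_left_mono prod_mono) auto
  also have "(\<Prod>i\<in>I. exp (400 * \<theta>\<^sup>2 * K\<^sup>2)) = exp (400 * real (card I) * \<theta>\<^sup>2 * K\<^sup>2)"
    by (simp add: exp_of_nat_mult[symmetric] mult_ac)
  also have "exp (- \<theta> * a) * \<dots> = exp (- \<theta> * a + 400 * real (card I) * \<theta>\<^sup>2 * K\<^sup>2)"
    by (rule exp_add[symmetric])
  finally show ?thesis .
qed

lemma Bernstein_exponent:
  fixes K x N :: real
  assumes K: "K > 0" and x: "x > 0" and N: "N \<ge> 0"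
  obtains \<theta> where "\<theta> > 0" "\<theta> * K \<le> 1 / 8"
    "- \<theta> * (50 * K * (sqrt (x * N) + x)) + 400 * N * \<theta>\<^sup>2 * K\<^sup>2 \<le> - x"
proof (cases "x \<le> 25 * N")
  case True
  define r where "r = sqrt x"
  define q where "q = sqrt N"
  have r0: "r > 0" using x by (simp add: r_def)
  have q0: "q > 0" using True x by (simp add: q_def)
  have rq: "r \<le> 5 * q"
    using real_sqrt_le_mono[OF True] by (simp add: r_def q_def real_sqrt_mult)
  define \<theta> where "\<theta> = r / (40 * K * q)"
  have e1: "- \<theta> * (50 * K * (r * q + r\<^sup>2)) = - (5 / 4) * r\<^sup>2 - (5/4) * r ^ 3 / q"
    using K q0 by (simp add: \<theta>_def field_simps power2_eq_square power3_eq_cube)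
  have e2: "400 * q\<^sup>2 * \<theta>\<^sup>2 * K\<^sup>2 = r\<^sup>2 / 4"
    using K q0 by (simp add: \<theta>_def field_simps power2_eq_square)
  have "(5/4) * r ^ 3 / q \<ge> 0" using r0 q0 by simp
  moreover have "x = r\<^sup>2" "N = q\<^sup>2" "sqrt (x * N) = r * q"
    using x N by (simp_all add: r_def q_def real_sqrt_mult)
  ultimately have "- \<theta> * (50 * K * (sqrt (x * N) + x)) + 400 * N * \<theta>\<^sup>2 * K\<^sup>2 \<le> - x"
    using e1 e2 by simp
  moreover have "\<theta> > 0" "\<theta> * K \<le> 1 / 8" using r0 q0 K rq by (simp_all add: \<theta>_def field_simps)
  ultimately show ?thesis using that by blast
next
  case False
  define \<theta> where "\<theta> = 1 / (8 * K)"
  have "sqrt (x * N) \<ge> 0" using x N by simp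
  have e1: "- \<theta> * (50 * K * (sqrt (x * N) + x)) = - (25 / 4) * (sqrt (x * N) + x)"
    using K by (simp add: \<theta>_def field_simps)
  have e2: "400 * N * \<theta>\<^sup>2 * K\<^sup>2 = (25 / 4) * N"
    using K by (simp add: \<theta>_def field_simps power2_eq_square)
  have "- \<theta> * (50 * K * (sqrt (x * N) + x)) + 400 * N * \<theta>\<^sup>2 * K\<^sup>2 \<le> - x"
    unfolding e1 e2 using False x \<open>sqrt (x * N) \<ge> 0\<close> by (simp only: ring_distribs)
  moreover have "\<theta> > 0" "\<theta> * K \<le> 1 / 8" using K by (simp_all add: \<theta>_def)
  ultimately show ?thesis using that by blast
qed

lemma Bernstein_subexp:
  fixes W :: "'i \<Rightarrow> 'a \<Rightarrow> real"
  assumes fin: "finite I" and ind: "indep_vars (\<lambda>_. borel) W I" and K: "K > 0"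
    and int_exp: "\<And>i. i \<in> I \<Longrightarrow> integrable M (\<lambda>x. exp (\<bar>W i x\<bar> / K))"
    and E2: "\<And>i. i \<in> I \<Longrightarrow> (\<integral>x. exp (\<bar>W i x\<bar> / K) \<partial>M) \<le> 2"
    and x: "x \<ge> 0"
  shows "prob {\<omega>\<in>space M. 50 * K * (sqrt (x * real (card I)) + x)
            \<le> \<bar>\<Sum>i\<in>I. (W i \<omega> - expectation (W i))\<bar>} \<le> 2 * exp (- x)"
proof (cases "x = 0")
  case True
  then show ?thesis by (simp add: order_trans[OF prob_le_1])
next
  case False
  then have x0: "x > 0" using x by simp
  have [measurable]: "i \<in> I \<Longrightarrow> W i \<in> borel_measurable M" for i
    using ind by (simp add: indep_vars_def)
  let ?a = "50 * K * (sqrt (x * real (card I)) + x)"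
  let ?S = "\<lambda>\<omega>. \<Sum>i\<in>I. (W i \<omega> - expectation (W i))"
  obtain \<theta> where \<theta>: "\<theta> > 0" "\<theta> * K \<le> 1 / 8"
      and ex: "- \<theta> * ?a + 400 * real (card I) * \<theta>\<^sup>2 * K\<^sup>2 \<le> - x"
    using Bernstein_exponent[OF K x0, of "real (card I)"] by auto
  have tail: "prob {\<omega>\<in>space M. ?a \<le> \<sigma> * ?S \<omega>} \<le> exp (- x)" if "\<bar>\<sigma>\<bar> = 1" for \<sigma>
  proof -
    have "prob {\<omega>\<in>space M. ?a \<le> \<sigma> * ?S \<omega>} \<le> exp (- \<theta> * ?a + 400 * real (card I) * \<theta>\<^sup>2 * K\<^sup>2)"
      using Bernstein_one_sided[OF fin ind K int_exp E2 \<theta> that, of ?a] by (simp add: sum_distrib_left)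
    also have "\<dots> \<le> exp (- x)" using ex by simp
    finally show ?thesis .
  qed
  have [measurable]: "?S \<in> borel_measurable M" by measurable
  have "{\<omega>\<in>space M. ?a \<le> \<bar>?S \<omega>\<bar>} =
      {\<omega>\<in>space M. ?a \<le> 1 * ?S \<omega>} \<union> {\<omega>\<in>space M. ?a \<le> -1 * ?S \<omega>}"
    by (auto simp: abs_if)
  then have "prob {\<omega>\<in>space M. ?a \<le> \<bar>?S \<omega>\<bar>} \<le>
      prob {\<omega>\<in>space M. ?a \<le> 1 * ?S \<omega>} + prob {\<omega>\<in>space M. ?a \<le> -1 * ?S \<omega>}"
    by (simp only:) (rule measure_Un_le; measurable)
  also have "\<dots> \<le> 2 * exp (- x)" using tail[of 1] tail[of "-1"] by simp
  finally show ?thesis .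
qed

end

section \<open>Consequences of the model assumption\<close>

lemma psi2_norm_sq_le_imp_exp_sq_integral_le:
  fixes Y :: "'a \<Rightarrow> real"
  assumes Y: "Y \<in> borel_measurable M"
    and psi2: "(psi2_norm M Y)\<^sup>2 \<le> ereal c" and \<tau>: "\<tau> > 0" "c < \<tau>\<^sup>2"
  shows "integrable M (\<lambda>x. exp ((Y x)\<^sup>2 / \<tau>\<^sup>2))" "(\<integral>x. exp ((Y x)\<^sup>2 / \<tau>\<^sup>2) \<partial>M) \<le> 2"
proof -
  define S where "S = {t. 0 < t \<and> (\<integral>\<^sup>+ x. ennreal (exp ((Y x)\<^sup>2 / t\<^sup>2)) \<partial>M) \<le> 2}"
  have N: "psi2_norm M Y = Inf (ereal ` S)" by (simp add: psi2_norm_def S_def)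
  have N0: "0 \<le> psi2_norm M Y" unfolding N by (rule Inf_greatest) (auto simp: S_def)
  have "psi2_norm M Y < ereal \<tau>"
  proof (cases "psi2_norm M Y")
    case (real a)
    then have "a\<^sup>2 < \<tau>\<^sup>2" using psi2 \<tau> by simp
    then show ?thesis using \<tau> N0 real by (simp add: power_less_imp_less_base)
  qed (use psi2 N0 in auto)
  then obtain t where t: "t \<in> S" "t < \<tau>" unfolding N by (auto simp: Inf_less_iff)
  have "(\<integral>\<^sup>+ x. ennreal (exp ((Y x)\<^sup>2 / \<tau>\<^sup>2)) \<partial>M) \<le> (\<integral>\<^sup>+ x. ennreal (exp ((Y x)\<^sup>2 / t\<^sup>2)) \<partial>M)"
  proof (rule nn_integral_mono)
    fix x
    have "t\<^sup>2 \<le> \<tau>\<^sup>2" using t by (intro power_mono) (auto simp: S_def)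
    then have "(Y x)\<^sup>2 / \<tau>\<^sup>2 \<le> (Y x)\<^sup>2 / t\<^sup>2" using t by (intro divide_left_mono) (auto simp: S_def)
    then show "ennreal (exp ((Y x)\<^sup>2 / \<tau>\<^sup>2)) \<le> ennreal (exp ((Y x)\<^sup>2 / t\<^sup>2))" by simp
  qed
  also have "\<dots> \<le> 2" using t by (simp add: S_def)
  finally have nn: "(\<integral>\<^sup>+ x. ennreal (exp ((Y x)\<^sup>2 / \<tau>\<^sup>2)) \<partial>M) \<le> 2" .
  show int: "integrable M (\<lambda>x. exp ((Y x)\<^sup>2 / \<tau>\<^sup>2))"
    by (rule integrableI_nonneg) (use Y nn in \<open>auto simp: order_le_less_trans\<close>)
  have "ennreal (\<integral>x. exp ((Y x)\<^sup>2 / \<tau>\<^sup>2) \<partial>M) \<le> 2"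
    using nn nn_integral_eq_integral[OF int] by simp
  then show "(\<integral>x. exp ((Y x)\<^sup>2 / \<tau>\<^sup>2) \<partial>M) \<le> 2"
    by (metis ennreal_le_iff ennreal_numeral zero_le_numeral)
qed

lemma emeasure_le_density_bound:
  assumes "distributed M lborel Z (\<lambda>y. ennreal (f y))" "\<And>y. f y \<le> w" "A \<in> sets lborel"
  shows "emeasure M (Z -` A \<inter> space M) \<le> ennreal w * emeasure lborel A"
proof -
  have "emeasure M (Z -` A \<inter> space M) = (\<integral>\<^sup>+x. ennreal (f x) * indicator A x \<partial>lborel)"
    using distributed_emeasure[OF assms(1,3)] by simp
  also have "\<dots> \<le> (\<integral>\<^sup>+x. ennreal w * indicator A x \<partial>lborel)"
    using assms(2) by (intro nn_integral_mono) (auto simp: indicator_def intro: ennreal_leI)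
  also have "\<dots> = ennreal w * emeasure lborel A"
    using assms(3) by (simp add: nn_integral_cmult_indicator)
  finally show ?thesis .
qed

lemma exp_midpoint_le: "exp (((a::real) + b) / 2) \<le> (exp a + exp b) / 2"
proof -
  have "exp ((a + b) / 2) ^ 2 = exp a * exp b"
    by (simp add: exp_of_nat_mult[symmetric] exp_add[symmetric])
  also have "\<dots> \<le> ((exp a + exp b) / 2) ^ 2"
  proof -
    have "0 \<le> (exp a - exp b) ^ 2" by simp
    then show ?thesis by (simp add: power2_eq_square field_simps)
  qed
  finally show ?thesis by (rule power2_le_imp_le) (simp add: add_pos_pos less_imp_le)
qed

lemma assumption_ABC_prob_space: "assumption_ABC n p w u P \<Longrightarrow> prob_space P"
  by (simp add: assumption_ABC_def)

lemma assumption_ABC_measurable: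
  fixes f :: "data \<Rightarrow> real"
  assumes "assumption_ABC n p w u P" "f \<in> borel_measurable borel"
  shows "f \<in> borel_measurable P"
proof -
  have "sets P = sets borel" using assms(1) by (simp add: assumption_ABC_def)
  then have "measurable P (borel :: real measure) = measurable borel borel"
    by (rule measurable_cong_sets) simp
  then show ?thesis using assms(2) by simp
qed

lemma borel_measurable_data_coordinate [measurable]: "(\<lambda>X::data. X i j) \<in> borel_measurable borel"
  by (rule measurable_product_then_coordinatewise[OF measurable_product_coordinates])

lemma assumption_ABC_measurable_coordinate:
  "assumption_ABC n p w u P \<Longrightarrow> (\<lambda>X. X i j) \<in> borel_measurable P"
  by (rule assumption_ABC_measurable) measurable

lemma assumption_ABC_measurable_inner:
  "assumption_ABC n p w u P \<Longrightarrow> (\<lambda>X. inner_p p v (X i)) \<in> borel_measurable P"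
  by (rule assumption_ABC_measurable) (unfold inner_p_def, measurable)

lemma assumption_ABC_indep:
  assumes "assumption_ABC n p w u P" "I \<subseteq> {1..n}" "\<And>i. i \<in> I \<Longrightarrow> g i \<in> borel_measurable borel"
  shows "prob_space.indep_vars P (\<lambda>_. borel) (\<lambda>i X. g i (X i)) I"
proof -
  interpret prob_space P using assms(1) by (rule assumption_ABC_prob_space)
  have "indep_vars (\<lambda>_. borel) (\<lambda>i X. X i) I"
    using indep_vars_subset assms(1,2) by (auto simp: assumption_ABC_def)
  then show ?thesis by (rule indep_vars_compose2) (use assms(3) in auto)
qed

lemma assumption_ABC_subgaussian:
  assumes A: "assumption_ABC n p w u P" and i: "i \<in> {1..n}" and v: "v \<in> unit_sphere p"
    and \<tau>: "\<tau> > 0" "u * (\<integral>X. (inner_p p v (X i))\<^sup>2 \<partial>P) < \<tau>\<^sup>2"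
  shows "integrable P (\<lambda>X. exp ((inner_p p v (X i))\<^sup>2 / \<tau>\<^sup>2))"
    "(\<integral>X. exp ((inner_p p v (X i))\<^sup>2 / \<tau>\<^sup>2) \<partial>P) \<le> 2"
proof -
  have "(psi2_norm P (\<lambda>X. inner_p p v (X i)))\<^sup>2 \<le> ereal (u * (\<integral>X. (inner_p p v (X i))\<^sup>2 \<partial>P))"
    using A i v by (simp add: assumption_ABC_def)
  from psi2_norm_sq_le_imp_exp_sq_integral_le[OF assumption_ABC_measurable_inner[OF A] this \<tau>]
  show "integrable P (\<lambda>X. exp ((inner_p p v (X i))\<^sup>2 / \<tau>\<^sup>2))"
    "(\<integral>X. exp ((inner_p p v (X i))\<^sup>2 / \<tau>\<^sup>2) \<partial>P) \<le> 2" .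
qed

lemma assumption_ABC_anticoncentration:
  assumes A: "assumption_ABC n p w u P" and i: "i \<in> {1..n}" and v: "v \<in> unit_sphere p"
    and r: "r \<ge> 0"
  shows "0 < (\<integral>X. (inner_p p v (X i))\<^sup>2 \<partial>P)"
    "measure P {X\<in>space P. \<bar>inner_p p v (X i)\<bar> \<le> r * sqrt (\<integral>X. (inner_p p v (X i))\<^sup>2 \<partial>P)}
       \<le> 2 * w * r"
proof -
  interpret prob_space P using A by (rule assumption_ABC_prob_space)
  let ?Y = "\<lambda>X. inner_p p v (X i)"
  define \<sigma> where "\<sigma> = sqrt (\<integral>X. (?Y X)\<^sup>2 \<partial>P)"
  let ?Z = "\<lambda>X. ?Y X / \<sigma>"
  obtain f where f: "\<And>y. 0 \<le> f y \<and> f y \<le> w" "distributed P lborel ?Z (\<lambda>y. ennreal (f y))"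
    using A i v unfolding assumption_ABC_def \<sigma>_def by blast
  have w0: "0 \<le> w" using f(1)[of 0] by simp
  have \<sigma>0: "\<sigma> > 0"
  proof (rule ccontr)
    assume "\<not> \<sigma> > 0"
    moreover have "0 \<le> (\<integral>X. (?Y X)\<^sup>2 \<partial>P)" by simp
    ultimately have "\<sigma> = 0" by (simp add: \<sigma>_def)
    then have "?Z -` {0} \<inter> space P = space P" by auto
    then have "emeasure P (space P) \<le> ennreal w * emeasure lborel {0::real}"
      using emeasure_le_density_bound[OF f(2), where A="{0}"] f(1) by auto
    then show False by (simp add: emeasure_space_1)
  qed
  then show "0 < (\<integral>X. (inner_p p v (X i))\<^sup>2 \<partial>P)" by (simp add: \<sigma>_def)
  have "{X\<in>space P. \<bar>?Y X\<bar> \<le> r * \<sigma>} = ?Z -` {-r..r} \<inter> space P"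
    using \<sigma>0 by (auto simp: abs_le_iff field_simps)
  then have "emeasure P {X\<in>space P. \<bar>?Y X\<bar> \<le> r * \<sigma>} \<le> ennreal w * emeasure lborel {-r..r}"
    using emeasure_le_density_bound[OF f(2), where A="{-r..r}"] f(1) by auto
  also have "\<dots> = ennreal (2 * w * r)" using r w0 by (simp add: ennreal_mult[symmetric] mult_ac)
  finally show "measure P {X\<in>space P. \<bar>?Y X\<bar> \<le> r * sqrt (\<integral>X. (?Y X)\<^sup>2 \<partial>P)} \<le> 2 * w * r"
    unfolding \<sigma>_def[symmetric] using r w0 by (simp add: emeasure_eq_measure)
qed

lemma assumption_ABC_integrable_product:
  assumes A: "assumption_ABC n p w u P" and i: "i \<in> {1..n}" and j: "j < p" and k: "k < p"
  shows "integrable P (\<lambda>X. X i j * X i k)"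
proof (rule Bochner_Integration.integrable_bound)
  have "integrable P (\<lambda>X. (inner_p p (unit_vec l) (X i))\<^sup>2)" if "l < p" for l
    using A i unit_vec_in_unit_sphere[OF that] by (simp add: assumption_ABC_def)
  then show "integrable P (\<lambda>X. (X i j)\<^sup>2 + (X i k)\<^sup>2)"
    using j k by (simp add: inner_unit_vec)
  show "(\<lambda>X. X i j * X i k) \<in> borel_measurable P"
    using assumption_ABC_measurable_coordinate[OF A] by measurable
  show "AE X in P. norm (X i j * X i k) \<le> norm ((X i j)\<^sup>2 + (X i k)\<^sup>2)"
  proof (rule AE_I2)
    fix X :: data
    have "\<bar>X i j * X i k\<bar> \<le> (X i j)\<^sup>2 + (X i k)\<^sup>2"
      using abs_mult_le_half_sum_sq[of "X i j" "X i k"] by simp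
    then show "norm (X i j * X i k) \<le> norm ((X i j)\<^sup>2 + (X i k)\<^sup>2)" by simp
  qed
qed

lemma assumption_ABC_product_moment:
  "assumption_ABC n p w u P \<Longrightarrow> i \<in> {1..n} \<Longrightarrow> j < p \<Longrightarrow> k < p \<Longrightarrow>
    (\<integral>X. X i j * X i k \<partial>P) = cov_mat P i j k"
  by (simp add: cov_mat_def assumption_ABC_def)

lemma assumption_ABC_second_moment:
  assumes A: "assumption_ABC n p w u P" and i: "i \<in> {1..n}"
  shows "(\<integral>X. (inner_p p v (X i))\<^sup>2 \<partial>P) = quad_form p (cov_mat P i) v"
proof -
  have e: "(inner_p p v (X i))\<^sup>2 = (\<Sum>j<p. \<Sum>k<p. v j * (X i j * X i k) * v k)" for X :: data
    by (simp add: inner_p_def power2_eq_square sum_product mult_ac)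
  have int: "integrable P (\<lambda>X. v j * (X i j * X i k) * v k)" if "j < p" "k < p" for j k
    using assumption_ABC_integrable_product[OF A i that] by simp
  have "(\<integral>X. (inner_p p v (X i))\<^sup>2 \<partial>P) =
      (\<Sum>j<p. \<integral>X. (\<Sum>k<p. v j * (X i j * X i k) * v k) \<partial>P)"
    unfolding e by (rule Bochner_Integration.integral_sum) (use int in auto)
  also have "\<dots> = (\<Sum>j<p. \<Sum>k<p. v j * (\<integral>X. X i j * X i k \<partial>P) * v k)"
    by (intro sum.cong refl Bochner_Integration.integral_sum) (use int in auto)
  also have "\<dots> = quad_form p (cov_mat P i) v"
    unfolding quad_form_def using assumption_ABC_product_moment[OF A i] by simp
  finally show ?thesis .
qed

lemma assumption_ABC_second_moment_coordinate:
  "assumption_ABC n p w u P \<Longrightarrow> i \<in> {1..n} \<Longrightarrow> j < p \<Longrightarrow> (\<integral>X. (X i j)\<^sup>2 \<partial>P) = cov_mat P i j j"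
  using assumption_ABC_product_moment[of n p w u P i j j] by (simp add: power2_eq_square)

lemma assumption_ABC_subgaussian_coordinate:
  assumes "assumption_ABC n p w u P" "i \<in> {1..n}" "j < p"
    and "\<tau> > 0" "u * (\<integral>X. (X i j)\<^sup>2 \<partial>P) < \<tau>\<^sup>2"
  shows "integrable P (\<lambda>X. exp ((X i j)\<^sup>2 / \<tau>\<^sup>2))" "(\<integral>X. exp ((X i j)\<^sup>2 / \<tau>\<^sup>2) \<partial>P) \<le> 2"
  using assumption_ABC_subgaussian[OF assms(1,2) unit_vec_in_unit_sphere[OF assms(3)] assms(4)] assms
  by (simp_all add: inner_unit_vec)

lemma assumption_ABC_subexponential_product:
  assumes A: "assumption_ABC n p w u P" and i: "i \<in> {1..n}" and j: "j < p" and k: "k < p"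
    and \<tau>: "\<tau> > 0" "u * (\<integral>X. (X i j)\<^sup>2 \<partial>P) < \<tau>\<^sup>2" "u * (\<integral>X. (X i k)\<^sup>2 \<partial>P) < \<tau>\<^sup>2"
  shows "integrable P (\<lambda>X. exp (\<bar>X i j * X i k\<bar> / \<tau>\<^sup>2))"
    "(\<integral>X. exp (\<bar>X i j * X i k\<bar> / \<tau>\<^sup>2) \<partial>P) \<le> 2"
proof -
  interpret prob_space P using A by (rule assumption_ABC_prob_space)
  note sj = assumption_ABC_subgaussian_coordinate[OF A i j \<tau>(1,2)]
  note sk = assumption_ABC_subgaussian_coordinate[OF A i k \<tau>(1,3)]
  let ?b = "\<lambda>X. (exp ((X i j)\<^sup>2 / \<tau>\<^sup>2) + exp ((X i k)\<^sup>2 / \<tau>\<^sup>2)) / 2"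
  have pt: "exp (\<bar>X i j * X i k\<bar> / \<tau>\<^sup>2) \<le> ?b X" for X :: data
  proof -
    have "\<bar>X i j * X i k\<bar> / \<tau>\<^sup>2 \<le> (((X i j)\<^sup>2 + (X i k)\<^sup>2) / 2) / \<tau>\<^sup>2"
      using abs_mult_le_half_sum_sq \<tau>(1) by (intro divide_right_mono) auto
    then have "\<bar>X i j * X i k\<bar> / \<tau>\<^sup>2 \<le> ((X i j)\<^sup>2 / \<tau>\<^sup>2 + (X i k)\<^sup>2 / \<tau>\<^sup>2) / 2"
      using \<tau>(1) by (simp add: field_simps)
    then have "exp (\<bar>X i j * X i k\<bar> / \<tau>\<^sup>2) \<le> exp (((X i j)\<^sup>2 / \<tau>\<^sup>2 + (X i k)\<^sup>2 / \<tau>\<^sup>2) / 2)"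
      by simp
    also have "\<dots> \<le> ?b X" by (rule exp_midpoint_le)
    finally show ?thesis .
  qed
  have ib: "integrable P ?b" using sj(1) sk(1) by simp
  show int: "integrable P (\<lambda>X. exp (\<bar>X i j * X i k\<bar> / \<tau>\<^sup>2))"
    using assumption_ABC_measurable_coordinate[OF A]
    by (intro Bochner_Integration.integrable_bound[OF ib]) (use pt in auto)
  have "(\<integral>X. exp (\<bar>X i j * X i k\<bar> / \<tau>\<^sup>2) \<partial>P) \<le> (\<integral>X. ?b X \<partial>P)"
    by (rule integral_mono[OF int ib]) (rule pt)
  also have "\<dots> \<le> 2" using sj sk by simp
  finally show "(\<integral>X. exp (\<bar>X i j * X i k\<bar> / \<tau>\<^sup>2) \<partial>P) \<le> 2" .
qed

section \<open>Tail bounds for the sample statistics\<close>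

text \<open>By the density bound (B), \<open>\<bar>X\<^sub>i\<^sub>j\<bar> \<le> r \<sigma>\<close> has probability at most \<open>2 w r\<close>;
  this controls the Laplace transform of \<open>-X\<^sub>i\<^sub>j\<^sup>2\<close> and hence the lower tail of a sum of squares.\<close>

lemma assumption_ABC_neg_sq_mgf_le:
  assumes A: "assumption_ABC n p w u P" and i: "i \<in> {1..n}" and j: "j < p"
    and \<sigma>2: "0 < \<sigma>2" "(\<integral>X. (X i j)\<^sup>2 \<partial>P) = \<sigma>2" and \<theta>: "\<theta> > 0" and r: "r \<ge> 0"
  shows "integrable P (\<lambda>X. exp (\<theta> * - ((X i j)\<^sup>2 / \<sigma>2)))"
    "(\<integral>X. exp (\<theta> * - ((X i j)\<^sup>2 / \<sigma>2)) \<partial>P) \<le> 2 * w * r + exp (- \<theta> * r\<^sup>2)"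
proof -
  interpret prob_space P using A by (rule assumption_ABC_prob_space)
  note [measurable] = assumption_ABC_measurable_coordinate[OF A]
  let ?f = "\<lambda>X. exp (\<theta> * - ((X i j)\<^sup>2 / \<sigma>2))"
  let ?B = "{X\<in>space P. \<bar>X i j\<bar> \<le> r * sqrt \<sigma>2}"
  have B: "?B \<in> events" by measurable
  have "prob ?B \<le> 2 * w * r"
    using assumption_ABC_anticoncentration(2)[OF A i unit_vec_in_unit_sphere[OF j] r] j \<sigma>2
    by (simp add: inner_unit_vec)
  have pt: "?f X \<le> indicator ?B X + exp (- \<theta> * r\<^sup>2)" if X: "X \<in> space P" for X
  proof (cases "X \<in> ?B")
    case True
    have "0 \<le> \<theta> * ((X i j)\<^sup>2 / \<sigma>2)" using \<theta> \<sigma>2 by simp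
    then have "?f X \<le> 1" by simp
    then show ?thesis using True by (simp add: add_increasing2)
  next
    case False
    then have "(r * sqrt \<sigma>2)\<^sup>2 \<le> (\<bar>X i j\<bar>)\<^sup>2" using X r \<sigma>2 by (intro power_mono) auto
    then have "r\<^sup>2 \<le> (X i j)\<^sup>2 / \<sigma>2" using \<sigma>2 by (simp add: field_simps)
    then have "\<theta> * r\<^sup>2 \<le> \<theta> * ((X i j)\<^sup>2 / \<sigma>2)" using \<theta> by (intro mult_left_mono) auto
    then have "?f X \<le> exp (- \<theta> * r\<^sup>2)" by simp
    moreover have "0 \<le> indicat_real ?B X" by simp
    ultimately show ?thesis by linarith
  qed
  have ib: "integrable P (\<lambda>X. indicator ?B X + exp (- \<theta> * r\<^sup>2))"
    using B by (intro Bochner_Integration.integrable_add integrable_real_indicator)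
      (auto simp: less_top[symmetric])
  show int: "integrable P ?f"
    by (rule Bochner_Integration.integrable_bound[OF ib]) (use pt in auto)
  have "(\<integral>X. ?f X \<partial>P) \<le> (\<integral>X. indicator ?B X + exp (- \<theta> * r\<^sup>2) \<partial>P)"
    by (rule integral_mono_AE[OF int ib]) (use pt in auto)
  also have "\<dots> = prob ?B + exp (- \<theta> * r\<^sup>2)"
    using B by (simp add: less_top[symmetric] prob_space)
  finally show "(\<integral>X. ?f X \<partial>P) \<le> 2 * w * r + exp (- \<theta> * r\<^sup>2)"
    using \<open>prob ?B \<le> 2 * w * r\<close> by simp
qed

lemma sum_sq_coordinate_lower_tail:
  assumes A: "assumption_ABC n p w u P" and I: "I \<subseteq> {1..n}" and j: "j < p"
    and \<sigma>2: "0 < \<sigma>2" "\<And>i. i \<in> I \<Longrightarrow> (\<integral>X. (X i j)\<^sup>2 \<partial>P) = \<sigma>2"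
    and \<theta>: "\<theta> > 0" and r: "r \<ge> 0"
  shows "measure P {X\<in>space P. (\<Sum>i\<in>I. (X i j)\<^sup>2) \<le> real (card I) * \<sigma>2 / \<theta>}
     \<le> (exp 1 * (2 * w * r + exp (- \<theta> * r\<^sup>2))) ^ card I"
proof -
  interpret prob_space P using A by (rule assumption_ABC_prob_space)
  have finI: "finite I" using I finite_subset by blast
  let ?W = "\<lambda>i X. - ((X i j)\<^sup>2 / \<sigma>2)"
  let ?q = "2 * w * r + exp (- \<theta> * r\<^sup>2)"
  have ind: "indep_vars (\<lambda>_. borel) (\<lambda>i X. (\<lambda>x. - ((x j)\<^sup>2 / \<sigma>2)) (X i)) I"
    by (rule assumption_ABC_indep[OF A I]) simp
  note mgf = assumption_ABC_neg_sq_mgf_le[OF A _ j \<sigma>2(1) \<sigma>2(2) \<theta> r]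
  have "{X\<in>space P. (\<Sum>i\<in>I. (X i j)\<^sup>2) \<le> real (card I) * \<sigma>2 / \<theta>} =
        {X\<in>space P. - real (card I) / \<theta> \<le> (\<Sum>i\<in>I. ?W i X)}"
    using \<sigma>2(1) \<theta> by (auto simp: sum_negf sum_divide_distrib[symmetric] field_simps)
  also have "prob \<dots> \<le> exp (- \<theta> * (- real (card I) / \<theta>)) * (\<Prod>i\<in>I. \<integral>X. exp (\<theta> * ?W i X) \<partial>P)"
    by (rule indep_sum_Chernoff[OF finI ind \<theta>]) (use mgf I in auto)
  also have "\<dots> \<le> exp (real (card I)) * (\<Prod>i\<in>I. ?q)"
    using \<theta> mgf I by (intro mult_mono prod_mono) (auto intro!: prod_nonneg integral_nonneg_AE)
  also have "\<dots> = (exp 1 * ?q) ^ card I"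
    by (simp add: power_mult_distrib exp_of_nat_mult[symmetric])
  finally show ?thesis .
qed

lemma sum_sq_coordinate_upper_tail:
  assumes A: "assumption_ABC n p w u P" and I: "I \<subseteq> {1..n}" and j: "j < p"
    and M: "0 < M" and u: "0 < u" and E: "\<And>i. i \<in> I \<Longrightarrow> (\<integral>X. (X i j)\<^sup>2 \<partial>P) \<le> M"
  shows "measure P {X\<in>space P. real (card I) * a * M \<le> (\<Sum>i\<in>I. (X i j)\<^sup>2)}
     \<le> exp (- real (card I) * a / (2 * u)) * 2 ^ card I"
proof -
  interpret prob_space P using A by (rule assumption_ABC_prob_space)
  have finI: "finite I" using I finite_subset by blast
  let ?s = "1 / (2 * u * M)"
  have ind: "indep_vars (\<lambda>_. borel) (\<lambda>i X. (\<lambda>x. (x j)\<^sup>2) (X i)) I"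
    by (rule assumption_ABC_indep[OF A I]) simp
  have mgf: "integrable P (\<lambda>X. exp (?s * (X i j)\<^sup>2)) \<and> (\<integral>X. exp (?s * (X i j)\<^sup>2) \<partial>P) \<le> 2"
    if "i \<in> I" for i
  proof -
    have lt: "u * (\<integral>X. (X i j)\<^sup>2 \<partial>P) < (sqrt (2 * u * M))\<^sup>2"
      using mult_left_mono[OF E[OF that], of u] u M by simp
    show ?thesis
      using assumption_ABC_subgaussian_coordinate[OF A _ j _ lt] that I u M by auto
  qed
  have "prob {X\<in>space P. real (card I) * a * M \<le> (\<Sum>i\<in>I. (X i j)\<^sup>2)} \<le>
      exp (- ?s * (real (card I) * a * M)) * (\<Prod>i\<in>I. \<integral>X. exp (?s * (X i j)\<^sup>2) \<partial>P)"
    by (rule indep_sum_Chernoff[OF finI ind]) (use mgf u M in auto)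
  also have "\<dots> \<le> exp (- ?s * (real (card I) * a * M)) * (\<Prod>i\<in>I. 2)"
    using mgf by (intro mult_left_mono prod_mono) (auto intro: integral_nonneg_AE)
  also have "- ?s * (real (card I) * a * M) = - real (card I) * a / (2 * u)"
    using M u by (simp add: field_simps)
  finally show ?thesis by simp
qed

lemma sum_sq_inner_deviation:
  assumes A: "assumption_ABC n p w u P" and I: "I \<subseteq> {1..n}" and v: "v \<in> unit_sphere p"
    and M: "0 < M" and u: "0 < u" and E: "\<And>i. i \<in> I \<Longrightarrow> (\<integral>X. (inner_p p v (X i))\<^sup>2 \<partial>P) \<le> M"
    and x: "x \<ge> 0"
  shows "measure P {X\<in>space P. 50 * (2 * u * M) * (sqrt (x * real (card I)) + x)
     \<le> \<bar>\<Sum>i\<in>I. ((inner_p p v (X i))\<^sup>2 - (\<integral>Y. (inner_p p v (Y i))\<^sup>2 \<partial>P))\<bar>} \<le> 2 * exp (- x)"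
proof -
  interpret prob_space P using A by (rule assumption_ABC_prob_space)
  have ind: "indep_vars (\<lambda>_. borel) (\<lambda>i X. (\<lambda>x. (inner_p p v x)\<^sup>2) (X i)) I"
    by (rule assumption_ABC_indep[OF A I]) (unfold inner_p_def, measurable)
  have "integrable P (\<lambda>X. exp (\<bar>(inner_p p v (X i))\<^sup>2\<bar> / (2 * u * M))) \<and>
     (\<integral>X. exp (\<bar>(inner_p p v (X i))\<^sup>2\<bar> / (2 * u * M)) \<partial>P) \<le> 2" if "i \<in> I" for i
  proof -
    have lt: "u * (\<integral>X. (inner_p p v (X i))\<^sup>2 \<partial>P) < (sqrt (2 * u * M))\<^sup>2"
      using mult_left_mono[OF E[OF that], of u] u M by simp
    show ?thesis
      using assumption_ABC_subgaussian[OF A _ v _ lt] that I u M by auto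
  qed
  then show ?thesis
    using Bernstein_subexp[OF finite_subset[OF I finite_atLeastAtMost] ind, where K="2 * u * M" and x=x] u M x by auto
qed

lemma Sigma_hat_diff_entry_deviation:
  assumes A: "assumption_ABC n p w u P" and j: "j < p" and k: "k < p"
    and t: "1 \<le> t" "2 * t \<le> n" and \<sigma>: "0 < \<sigma>" and u: "0 < u"
    and Ejk: "\<And>i. i \<in> {1..n} \<Longrightarrow> (\<integral>X. X i j * X i k \<partial>P) = c"
    and Ej: "\<And>i. i \<in> {1..n} \<Longrightarrow> (\<integral>X. (X i j)\<^sup>2 \<partial>P) \<le> \<sigma>"
    and Ek: "\<And>i. i \<in> {1..n} \<Longrightarrow> (\<integral>X. (X i k)\<^sup>2 \<partial>P) \<le> \<sigma>"
    and x: "x \<ge> 0"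
  shows "measure P {X\<in>space P. 50 * (2 * u * \<sigma>) * (sqrt (x * real (2 * t)) + x)
     \<le> real t * \<bar>Sigma_hat_1 X t j k - Sigma_hat_2 n X t j k\<bar>} \<le> 2 * exp (- x)"
proof -
  interpret prob_space P using A by (rule assumption_ABC_prob_space)
  let ?I = "{1..t} \<union> {n - t + 1..n}"
  let ?W = "\<lambda>i X. (if i \<le> t then 1 else -1) * (X i j * X i k)"
  have I: "?I \<subseteq> {1..n}" and disj: "{1..t} \<inter> {n - t + 1..n} = {}" using t by auto
  then have card: "card ?I = 2 * t" using t by (simp add: card_Un_disjoint)
  have ind: "indep_vars (\<lambda>_. borel) (\<lambda>i X. (\<lambda>x. (if i \<le> t then 1 else -1) * (x j * x k)) (X i)) ?I"
    by (rule assumption_ABC_indep[OF A I]) simp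
  have "integrable P (\<lambda>X. exp (\<bar>?W i X\<bar> / (2 * u * \<sigma>))) \<and>
     (\<integral>X. exp (\<bar>?W i X\<bar> / (2 * u * \<sigma>)) \<partial>P) \<le> 2" if "i \<in> ?I" for i
  proof -
    have lt: "u * (\<integral>X. (X i l)\<^sup>2 \<partial>P) < (sqrt (2 * u * \<sigma>))\<^sup>2" if "(\<integral>X. (X i l)\<^sup>2 \<partial>P) \<le> \<sigma>" for l
      using mult_left_mono[OF that, of u] u \<sigma> by simp
    have "i \<in> {1..n}" using that I by auto
    then show ?thesis
      using assumption_ABC_subexponential_product[OF A _ j k _ lt lt] Ej Ek u \<sigma>
      by (simp add: abs_mult)
  qed
  then have "prob {X\<in>space P. 50 * (2 * u * \<sigma>) * (sqrt (x * real (card ?I)) + x)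
      \<le> \<bar>\<Sum>i\<in>?I. (?W i X - expectation (?W i))\<bar>} \<le> 2 * exp (- x)"
    using Bernstein_subexp[OF _ ind, where K="2 * u * \<sigma>" and x=x] u \<sigma> x by auto
  moreover have "(\<Sum>i\<in>?I. expectation (?W i)) = 0"
  proof -
    have "(\<Sum>i\<in>{1..t}. expectation (?W i)) = (\<Sum>i\<in>{1..t}. c)"
      using t Ejk by (intro sum.cong) auto
    moreover have "(\<Sum>i\<in>{n - t + 1..n}. expectation (?W i)) = (\<Sum>i\<in>{n - t + 1..n}. - c)"
      using t Ejk by (intro sum.cong) auto
    ultimately show ?thesis using disj t by (simp add: sum.union_disjoint)
  qed
  then have "(\<Sum>i\<in>?I. (?W i X - expectation (?W i))) = real t * (Sigma_hat_1 X t j k - Sigma_hat_2 n X t j k)"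
    for X using Sigma_hat_diff_eq_signed_sum[OF t(2)] by (simp add: sum_subtractf)
  ultimately show ?thesis using card t by (simp add: abs_mult)
qed

section \<open>Dyadic grids and the scale estimate\<close>

lemma T_grid_bounds:
  assumes "1 \<le> n" "t \<in> T_grid n"
  shows "1 \<le> t" "2 * t \<le> n"
proof -
  obtain k where t: "t = 2 ^ k" and k: "int k \<le> \<lfloor>log 2 (real n / 2)\<rfloor>"
    using assms(2) by (auto simp: T_grid_def)
  have "real k \<le> log 2 (real n / 2)" using k by (simp add: le_floor_iff)
  then have "2 ^ k \<le> real n / 2" using assms(1) by (simp add: le_log_iff powr_realpow)
  then have "real (2 * t) \<le> real n" by (simp add: t)
  then show "1 \<le> t" "2 * t \<le> n" using t by (simp_all del: of_nat_mult)
qed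

lemma T_grid_approx:
  assumes "1 \<le> m" "2 * m \<le> n"
  obtains t where "t \<in> T_grid n" "t \<le> m" "m < 2 * t"
proof -
  obtain k where k: "2 ^ k \<le> m" "m < 2 ^ (k + 1)" using ex_power_ivl1[of 2 m] assms(1) by auto
  have "2 * 2 ^ k \<le> n" using k(1) assms(2) by linarith
  then have "real (2 * 2 ^ k) \<le> real n" by (simp only: of_nat_le_iff)
  then have "2 powr real k \<le> real n / 2" by (simp add: powr_realpow)
  then have "int k \<le> \<lfloor>log 2 (real n / 2)\<rfloor>"
    using assms by (simp add: le_floor_iff le_log_iff)
  then have "2 ^ k \<in> T_grid n" by (auto simp: T_grid_def)
  then show ?thesis using that k by simp
qed

lemma S_grid_approx:
  assumes "1 \<le> s" "s \<le> p"
  obtains s' where "s' \<in> S_grid p" "s' \<le> s" "s < 2 * s'"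
proof -
  obtain k where k: "2 ^ k \<le> s" "s < 2 ^ (k + 1)" using ex_power_ivl1[of 2 s] assms(1) by auto
  have "real (2 ^ k) \<le> real p" using k(1) assms(2) by (simp only: of_nat_le_iff)
  then have "2 powr real k \<le> real p" by (simp add: powr_realpow)
  then have "int k \<le> \<lfloor>log 2 (real p)\<rfloor>"
    using assms by (simp add: le_floor_iff le_log_iff)
  then have "2 ^ k \<in> S_grid p" by (auto simp: S_grid_def)
  then show ?thesis using that k by simp
qed

lemma S_grid_ge_1: "s \<in> S_grid p \<Longrightarrow> 1 \<le> s"
  by (auto simp: S_grid_def)

lemma card_T_grid_le:
  assumes "2 \<le> n"
  shows "finite (T_grid n)" "real (card (T_grid n)) \<le> 2 * ln (8 * real n)"
proof -
  define K where "K = nat \<lfloor>log 2 (real n / 2)\<rfloor>"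
  have sub: "T_grid n \<subseteq> (\<lambda>k. 2 ^ k) ` {..K}" by (auto simp: T_grid_def K_def)
  then show "finite (T_grid n)" using finite_subset by blast
  have "card (T_grid n) \<le> card {..K}"
    using card_mono[OF _ sub] card_image_le[of "{..K}" "\<lambda>k. (2::nat) ^ k"] by simp
  moreover have "real K \<le> log 2 (real n / 2)" using assms by (simp add: K_def)
  ultimately have "real (card (T_grid n)) \<le> log 2 (real n / 2) + 1"
    by (simp add: of_nat_le_iff[symmetric] del: of_nat_le_iff)
  also have "\<dots> = log 2 (real n)" using assms by (simp add: log_divide)
  also have "\<dots> = ln (real n) / ln 2" by (simp add: log_def)
  also have "\<dots> \<le> ln (real n) / (1 / 2)"
    using ln2_ge_two_thirds assms by (intro divide_left_mono) auto
  also have "\<dots> \<le> 2 * ln (8 * real n)" using assms by simp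
  finally show "real (card (T_grid n)) \<le> 2 * ln (8 * real n)" .
qed

lemma g_fun_ge_1: "1 \<le> p \<Longrightarrow> 1 \<le> g_fun p n"
proof -
  assume "1 \<le> p"
  then have "1 \<le> ln (exp 1 * real p)" by (simp add: ln_mult)
  then show ?thesis by (simp add: g_fun_def)
qed

lemma exp_neg_2_ln: "0 < (y::real) \<Longrightarrow> exp (- 2 * ln y) = 1 / y\<^sup>2"
  using exp_of_nat_mult[of 2 "ln y"] by (simp add: exp_minus divide_inverse)

lemma exp_neg_2_g_fun_le:
  assumes "1 \<le> p" "1 \<le> n"
  shows "exp (- 2 * g_fun p n) \<le> 1 / (exp 1 * real p)\<^sup>2"
    and "exp (- 2 * g_fun p n) \<le> 1 / (ln (8 * real n))\<^sup>2"
proof -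
  have "exp (- 2 * g_fun p n) \<le> exp (- 2 * ln (exp 1 * real p))" by (simp add: g_fun_def)
  also have "\<dots> = 1 / (exp 1 * real p)\<^sup>2" using assms by (intro exp_neg_2_ln) simp
  finally show "exp (- 2 * g_fun p n) \<le> 1 / (exp 1 * real p)\<^sup>2" .
  have "exp (- 2 * g_fun p n) \<le> exp (- 2 * ln (ln (8 * real n)))" by (simp add: g_fun_def)
  also have "\<dots> = 1 / (ln (8 * real n))\<^sup>2" using assms by (intro exp_neg_2_ln) simp
  finally show "exp (- 2 * g_fun p n) \<le> 1 / (ln (8 * real n))\<^sup>2" .
qed

lemma ceiling_ln_ep_bounds:
  assumes "1 \<le> p" "ln (exp 1 * real p) \<le> real n"
  shows "1 \<le> nat \<lceil>ln (exp 1 * real p)\<rceil>" "nat \<lceil>ln (exp 1 * real p)\<rceil> \<le> n"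
    "ln (exp 1 * real p) \<le> real (nat \<lceil>ln (exp 1 * real p)\<rceil>)"
proof -
  have "1 \<le> ln (exp 1 * real p)" using assms(1) by (simp add: ln_mult)
  then show "1 \<le> nat \<lceil>ln (exp 1 * real p)\<rceil>" "ln (exp 1 * real p) \<le> real (nat \<lceil>ln (exp 1 * real p)\<rceil>)"
    by linarith+
  show "nat \<lceil>ln (exp 1 * real p)\<rceil> \<le> n" using assms(2) by linarith
qed

lemma sigma2_con_ge_diag:
  assumes "j < p" "L = nat \<lceil>ln (exp 1 * real p)\<rceil>"
    and "c \<le> Sigma_hat_1 X L j j" "c \<le> Sigma_hat_2 n X L j j"
  shows "c \<le> sigma2_con n p X"
proof -
  have "c \<le> lam_hat_s p 1 (Sigma_hat_1 X L)"
    using abs_diag_le_lam_hat_s[of 1 j p "Sigma_hat_1 X L"] abs_ge_self[of "Sigma_hat_1 X L j j"]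
      assms(1,3) by linarith
  moreover have "c \<le> lam_hat_s p 1 (Sigma_hat_2 n X L)"
    using abs_diag_le_lam_hat_s[of 1 j p "Sigma_hat_2 n X L"] abs_ge_self[of "Sigma_hat_2 n X L j j"]
      assms(1,4) by linarith
  ultimately show ?thesis using assms(2) by (simp add: sigma2_con_def)
qed

lemma sigma2_con_le_diag_bound:
  assumes "1 \<le> p" "L = nat \<lceil>ln (exp 1 * real p)\<rceil>" "\<And>j. j < p \<Longrightarrow> Sigma_hat_1 X L j j \<le> c"
  shows "sigma2_con n p X \<le> c"
proof -
  have "\<bar>Sigma_hat_1 X L j k\<bar> \<le> c" if "j < p" "k < p" for j k
    using abs_Sigma_hat_1_le_diag[of X L j k] assms(3)[OF that(1)] assms(3)[OF that(2)] by simp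
  then have "lam_hat_s p 1 (Sigma_hat_1 X L) \<le> c"
    using lam_hat_s_le[OF assms(1), of 1 "Sigma_hat_1 X L" c] by simp
  then show ?thesis using assms(2) by (simp add: sigma2_con_def)
qed

section \<open>Size of the test\<close>

lemma ex_argmax_lessThan:
  fixes f :: "nat \<Rightarrow> 'a::linorder"
  assumes "0 < p"
  obtains j where "j < p" "\<And>k. k < p \<Longrightarrow> f k \<le> f j"
proof -
  have fin: "finite (f ` {..<p})" "f ` {..<p} \<noteq> {}" using assms by auto
  obtain j where j: "j < p" "Max (f ` {..<p}) = f j" using Max_in[OF fin] by auto
  show ?thesis
  proof (rule that[OF j(1)])
    fix k assume "k < p"
    then show "f k \<le> f j" using Max_ge[OF fin(1)] j(2) by (metis imageI lessThan_iff)
  qed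
qed

text \<open>\<open>null_radius\<close> and \<open>null_rate\<close> make both terms of the anticoncentration bound equal
  to \<open>\<delta>/64\<close>, and \<open>null_level\<close> pays for the union bound over \<open>T_grid n \<times> [p]\<^sup>2\<close>.\<close>

definition null_radius :: "real \<Rightarrow> real \<Rightarrow> real" where
  "null_radius \<delta> w = \<delta> / (128 * w)"

definition null_rate :: "real \<Rightarrow> real \<Rightarrow> real" where
  "null_rate \<delta> w = ln (64 / \<delta>) / (null_radius \<delta> w)\<^sup>2"

definition null_level :: "real \<Rightarrow> real" where
  "null_level \<delta> = 4 + ln (64 / \<delta>)"

definition lambda0 :: "real \<Rightarrow> real \<Rightarrow> real \<Rightarrow> real" where
  "lambda0 \<delta> w u = 300 * u * null_level \<delta> * null_rate \<delta> w"

lemma null_constants: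
  assumes "0 < \<delta>" "\<delta> < 1" "0 < w" "0 < u"
  shows "0 < null_radius \<delta> w" "0 < null_rate \<delta> w" "4 \<le> null_level \<delta>" "0 < lambda0 \<delta> w u"
proof -
  show r: "0 < null_radius \<delta> w" using assms by (simp add: null_radius_def)
  have "0 < ln (64 / \<delta>)" using assms by (intro ln_gt_zero) (simp add: field_simps)
  then show "0 < null_rate \<delta> w" "4 \<le> null_level \<delta>"
    using r by (simp_all add: null_rate_def null_level_def)
  then show "0 < lambda0 \<delta> w u" using assms by (simp add: lambda0_def)
qed

lemma null_anticoncentration_bound:
  assumes "0 < \<delta>" "\<delta> < 1" "0 < w" "1 \<le> L"
  shows "(exp 1 * (2 * w * null_radius \<delta> w + exp (- null_rate \<delta> w * (null_radius \<delta> w)\<^sup>2))) ^ L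
    \<le> 3 * \<delta> / 32"
proof -
  define q where "q = exp 1 * (2 * w * null_radius \<delta> w + exp (- null_rate \<delta> w * (null_radius \<delta> w)\<^sup>2))"
  have "null_rate \<delta> w * (null_radius \<delta> w)\<^sup>2 = ln (64 / \<delta>)"
    using null_constants(1)[OF assms(1-3) zero_less_one] by (simp add: null_rate_def)
  then have q_eq: "q = exp 1 * (\<delta> / 32)"
    using assms by (simp add: q_def null_radius_def exp_minus)
  have q: "0 \<le> q" "q \<le> 3 * \<delta> / 32"
    unfolding q_eq using exp_le assms by (simp_all add: mult_right_mono)
  then have "q ^ L \<le> q ^ 1"
    using assms by (intro power_decreasing) auto
  with q show ?thesis by (simp add: q_def)
qed

lemma null_union_bound:
  assumes p: "1 \<le> p" and n: "2 \<le> n" and \<gamma>: "4 \<le> \<gamma>" and c: "real c \<le> 2 * ln (8 * real n)"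
  shows "real c * (real p * real p) * (2 * exp (- (\<gamma> * g_fun p n))) \<le> 4 * exp (- (\<gamma> - 4))"
proof -
  let ?g = "g_fun p n"
  have g1: "1 \<le> ?g" using g_fun_ge_1[OF p] .
  have ln8: "1 \<le> ln (8 * real n)"
    using exp_le n ln_ge_iff[of "8 * real n" 1] by simp
  have "exp (- ((\<gamma> - 4) * ?g)) \<le> exp (- (\<gamma> - 4))"
    using mult_left_mono[OF g1, of "\<gamma> - 4"] \<gamma> by simp
  moreover have "exp (- (\<gamma> * ?g)) = exp (- 2 * ?g) * exp (- 2 * ?g) * exp (- ((\<gamma> - 4) * ?g))"
    by (simp add: exp_add[symmetric] algebra_simps)
  ultimately have "exp (- (\<gamma> * ?g)) \<le> 1 / (exp 1 * real p)\<^sup>2 * (1 / (ln (8 * real n))\<^sup>2) * exp (- (\<gamma> - 4))"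
    using exp_neg_2_g_fun_le[OF p, of n] n by (simp only:) (intro mult_mono, auto)
  then have "real c * (real p * real p) * (2 * exp (- (\<gamma> * ?g))) \<le>
      (2 * ln (8 * real n)) * (real p * real p) *
        (2 * (1 / (exp 1 * real p)\<^sup>2 * (1 / (ln (8 * real n))\<^sup>2) * exp (- (\<gamma> - 4))))"
    using c by (intro mult_mono) auto
  also have "\<dots> = 4 * exp (- (\<gamma> - 4)) / (exp 1 ^ 2 * ln (8 * real n))"
    using p ln8 by (simp add: field_simps power2_eq_square)
  also have "\<dots> \<le> 4 * exp (- (\<gamma> - 4))"
    using mult_mono[OF _ ln8, of 1 "exp 1 ^ 2"] by (simp add: divide_le_eq)
  finally show ?thesis .
qed

lemma deviation_le_rate:
  fixes t :: nat and \<gamma> g c :: real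
  assumes t: "1 \<le> t" and \<gamma>: "1 \<le> \<gamma>" and g: "0 \<le> g" and c: "0 \<le> c"
  shows "c * (sqrt (\<gamma> * g * real (2 * t)) + \<gamma> * g) / real t
     \<le> 3 * \<gamma> * c * max (sqrt (g / real t)) (g / real t)"
proof -
  let ?m = "max (sqrt (g / real t)) (g / real t)"
  have t0: "0 < real t" using t by simp
  have "\<gamma> * g * real (2 * t) = (2 * \<gamma>) * (g / real t) * (real t)\<^sup>2"
    using t0 by (simp add: power2_eq_square field_simps)
  then have "sqrt (\<gamma> * g * real (2 * t)) = sqrt (2 * \<gamma>) * sqrt (g / real t) * sqrt ((real t)\<^sup>2)"
    by (simp only: real_sqrt_mult)
  then have "sqrt (\<gamma> * g * real (2 * t)) / real t = sqrt (2 * \<gamma>) * sqrt (g / real t)"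
    using t0 by simp
  also have "\<dots> \<le> 2 * \<gamma> * ?m"
  proof (intro mult_mono)
    show "sqrt (2 * \<gamma>) \<le> 2 * \<gamma>"
      using \<gamma> by (intro real_le_lsqrt) (auto simp: power2_eq_square)
  qed (use \<gamma> g in auto)
  finally have "sqrt (\<gamma> * g * real (2 * t)) / real t \<le> 2 * \<gamma> * ?m" .
  moreover have "\<gamma> * g / real t \<le> \<gamma> * ?m"
    using mult_left_mono[of "g / real t" ?m \<gamma>] \<gamma> by simp
  ultimately have "sqrt (\<gamma> * g * real (2 * t)) / real t + \<gamma> * g / real t \<le> 3 * \<gamma> * ?m"
    by simp
  then have "c * (sqrt (\<gamma> * g * real (2 * t)) / real t + \<gamma> * g / real t) \<le> c * (3 * \<gamma> * ?m)"
    using c by (rule mult_left_mono)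
  moreover have "c * (sqrt (\<gamma> * g * real (2 * t)) + \<gamma> * g) / real t =
      c * (sqrt (\<gamma> * g * real (2 * t)) / real t + \<gamma> * g / real t)"
    by (simp only: add_divide_distrib times_divide_eq_right distrib_left)
  ultimately show ?thesis by (simp add: mult_ac)
qed

lemma psi_adaptive_0_or_1: "psi_adaptive n p lam X = 0 \<or> psi_adaptive n p lam X = 1"
  by (simp add: psi_adaptive_def)

lemma S_hat_le_threshold:
  assumes "1 \<le> p" "s \<in> S_grid p" "1 \<le> t" "0 \<le> c" "c \<le> lam * sigma2_con n p X"
    and "\<And>j k. j < p \<Longrightarrow> k < p \<Longrightarrow> \<bar>Sigma_hat_1 X t j k - Sigma_hat_2 n X t j k\<bar>
      \<le> c * max (sqrt (g_fun p n / real t)) (g_fun p n / real t)"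
  shows "S_hat n p X t s \<le> lam * sigma2_con n p X * h_fun p n s t"
proof -
  let ?m = "max (sqrt (g_fun p n / real t)) (g_fun p n / real t)"
  have "0 \<le> g_fun p n / real t" using g_fun_ge_1[OF assms(1), of n] by simp
  then have "0 \<le> ?m" by (simp add: le_max_iff_disj)
  have "S_hat n p X t s \<le> real s * (c * ?m)"
    unfolding S_hat_def using S_grid_ge_1[OF assms(2)] assms(1,6) by (intro lam_hat_s_le) auto
  also have "\<dots> \<le> real s * (lam * sigma2_con n p X * ?m)"
    using assms(5) \<open>0 \<le> ?m\<close> by (intro mult_left_mono mult_right_mono) auto
  finally show ?thesis by (simp add: h_fun_def mult_ac)
qed

lemma null_scale_good_event:
  assumes A: "assumption_ABC n p w u P" and p: "1 \<le> p" and nL: "ln (exp 1 * real p) \<le> real n"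
    and j: "j < p" and \<sigma>2: "0 < \<sigma>2" "\<And>i. i \<in> {1..n} \<Longrightarrow> (\<integral>X. (X i j)\<^sup>2 \<partial>P) = \<sigma>2"
    and \<delta>: "0 < \<delta>" "\<delta> < 1" and w: "0 < w"
  obtains B where "B \<in> sets P" "measure P B \<le> 3 * \<delta> / 16"
    "\<And>X. X \<in> space P \<Longrightarrow> X \<notin> B \<Longrightarrow> \<sigma>2 / null_rate \<delta> w \<le> sigma2_con n p X"
proof -
  note [measurable] = assumption_ABC_measurable_coordinate[OF A]
  define L where "L = nat \<lceil>ln (exp 1 * real p)\<rceil>"
  define \<theta> where "\<theta> = null_rate \<delta> w"
  have L: "1 \<le> L" "L \<le> n" using ceiling_ln_ep_bounds[OF p nL] by (simp_all add: L_def)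
  have \<theta>: "0 < \<theta>" and r: "0 < null_radius \<delta> w"
    using null_constants[OF \<delta> w zero_less_one] by (simp_all add: \<theta>_def)
  define B where "B I = {X\<in>space P. (\<Sum>i\<in>I. (X i j)\<^sup>2) \<le> real (card I) * \<sigma>2 / \<theta>}" for I
  have B_prob: "measure P (B I) \<le> 3 * \<delta> / 32" if "I \<subseteq> {1..n}" "card I = L" for I
  proof -
    have "\<And>i. i \<in> I \<Longrightarrow> (\<integral>X. (X i j)\<^sup>2 \<partial>P) = \<sigma>2" using that(1) \<sigma>2(2) by auto
    from sum_sq_coordinate_lower_tail[OF A that(1) j \<sigma>2(1) this \<theta>, of "null_radius \<delta> w"] r that(2)
    have "measure P (B I) \<le> (exp 1 * (2 * w * null_radius \<delta> w + exp (- \<theta> * (null_radius \<delta> w)\<^sup>2))) ^ L"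
      unfolding B_def by simp
    also have "\<dots> \<le> 3 * \<delta> / 32" using null_anticoncentration_bound[OF \<delta> w L(1)] by (simp add: \<theta>_def)
    finally show ?thesis .
  qed
  have B_sets: "B I \<in> sets P" for I unfolding B_def by measurable
  show ?thesis
  proof (rule that[of "B {1..L} \<union> B {n - L + 1..n}"])
    show "B {1..L} \<union> B {n - L + 1..n} \<in> sets P" using B_sets by auto
    show "measure P (B {1..L} \<union> B {n - L + 1..n}) \<le> 3 * \<delta> / 16"
      using measure_Un_le[OF B_sets B_sets, of "{1..L}" "{n - L + 1..n}"] B_prob[of "{1..L}"]
        B_prob[of "{n - L + 1..n}"] L by simp
  next
    fix X assume X: "X \<in> space P" "X \<notin> B {1..L} \<union> B {n - L + 1..n}"
    have "real L * (\<sigma>2 / \<theta>) < (\<Sum>i\<in>{1..L}. (X i j)\<^sup>2)"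
      using X by (auto simp: B_def)
    then have first: "\<sigma>2 / \<theta> \<le> Sigma_hat_1 X L j j"
      using L by (simp add: Sigma_hat_1_def power2_eq_square field_simps)
    have "real L * (\<sigma>2 / \<theta>) < (\<Sum>i\<in>{1..L}. (X (n - i + 1) j)\<^sup>2)"
      using X L sum_reverse_index[OF L(2), of "\<lambda>i. (X i j)\<^sup>2"] by (auto simp: B_def)
    then have last: "\<sigma>2 / \<theta> \<le> Sigma_hat_2 n X L j j"
      using L by (simp add: Sigma_hat_2_def power2_eq_square field_simps)
    show "\<sigma>2 / null_rate \<delta> w \<le> sigma2_con n p X"
      using sigma2_con_ge_diag[OF j L_def first last] by (simp add: \<theta>_def)
  qed
qed

lemma null_entries_good_event:
  assumes A: "assumption_ABC n p w u P" and p: "1 \<le> p" and n: "2 \<le> n"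
    and \<sigma>: "0 < \<sigma>" and \<Sigma>: "\<And>i j k. i \<in> {1..n} \<Longrightarrow> j < p \<Longrightarrow> k < p \<Longrightarrow> (\<integral>X. X i j * X i k \<partial>P) = \<Sigma> j k"
    and E: "\<And>i j. i \<in> {1..n} \<Longrightarrow> j < p \<Longrightarrow> (\<integral>X. (X i j)\<^sup>2 \<partial>P) \<le> \<sigma>"
    and \<delta>: "0 < \<delta>" "\<delta> < 1" and u: "0 < u"
  obtains B where "B \<in> sets P" "measure P B \<le> \<delta> / 16"
    "\<And>X t j k. X \<in> space P \<Longrightarrow> X \<notin> B \<Longrightarrow> t \<in> T_grid n \<Longrightarrow> j < p \<Longrightarrow> k < p \<Longrightarrow>
      \<bar>Sigma_hat_1 X t j k - Sigma_hat_2 n X t j k\<bar>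
        \<le> 300 * u * null_level \<delta> * \<sigma> * max (sqrt (g_fun p n / real t)) (g_fun p n / real t)"
proof -
  note [measurable] = assumption_ABC_measurable_coordinate[OF A]
  define \<gamma> where "\<gamma> = null_level \<delta>"
  define g where "g = g_fun p n"
  have \<gamma>: "4 \<le> \<gamma>" using null_constants(3)[OF \<delta> zero_less_one u] by (simp add: \<gamma>_def)
  have g: "1 \<le> g" using g_fun_ge_1[OF p] by (simp add: g_def)
  define a where "a t = 50 * (2 * u * \<sigma>) * (sqrt (\<gamma> * g * real (2 * t)) + \<gamma> * g)" for t :: nat
  define B where "B = (\<lambda>(t, j, k). {X\<in>space P. a t \<le> real t * \<bar>Sigma_hat_1 X t j k - Sigma_hat_2 n X t j k\<bar>})"
  define IDX where "IDX = T_grid n \<times> {..<p} \<times> {..<p}"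
  have fin: "finite IDX" using card_T_grid_le[OF n] by (simp add: IDX_def)
  have B_sets: "B x \<in> sets P" for x
    unfolding B_def Sigma_hat_1_def Sigma_hat_2_def by (cases x) (simp, measurable)
  have B_prob: "measure P (B x) \<le> 2 * exp (- (\<gamma> * g))" if "x \<in> IDX" for x
  proof -
    obtain t j k where x: "x = (t, j, k)" by (cases x) auto
    then have "t \<in> T_grid n" "j < p" "k < p" using that by (auto simp: IDX_def)
    note x = x this
    show ?thesis
      using Sigma_hat_diff_entry_deviation[OF A x(3,4) T_grid_bounds[of n t] \<sigma> u, of "\<Sigma> j k" "\<gamma> * g"]
        \<Sigma> E x n \<gamma> g by (simp add: B_def a_def)
  qed
  have "measure P (\<Union>x\<in>IDX. B x) \<le> (\<Sum>x\<in>IDX. measure P (B x))"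
    by (rule measure_UNION_le[OF fin]) (use B_sets in auto)
  also have "\<dots> \<le> (\<Sum>x\<in>IDX. 2 * exp (- (\<gamma> * g)))" by (rule sum_mono) (rule B_prob)
  also have "\<dots> = real (card (T_grid n)) * (real p * real p) * (2 * exp (- (\<gamma> * g)))"
    by (simp add: IDX_def card_cartesian_product)
  also have "\<dots> \<le> 4 * exp (- (\<gamma> - 4))"
    unfolding g_def by (rule null_union_bound[OF p n \<gamma> card_T_grid_le(2)[OF n]])
  also have "\<dots> = \<delta> / 16" using \<delta> by (simp add: \<gamma>_def null_level_def exp_minus)
  finally have prob: "measure P (\<Union>x\<in>IDX. B x) \<le> \<delta> / 16" .
  show ?thesis
  proof (rule that[OF _ prob])
    show "(\<Union>x\<in>IDX. B x) \<in> sets P" using fin B_sets by auto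
  next
    fix X t j k assume X: "X \<in> space P" "X \<notin> (\<Union>x\<in>IDX. B x)" and tjk: "t \<in> T_grid n" "j < p" "k < p"
    have t: "1 \<le> t" using T_grid_bounds[OF _ tjk(1)] n by simp
    have "real t * \<bar>Sigma_hat_1 X t j k - Sigma_hat_2 n X t j k\<bar> < a t"
      using X tjk by (auto simp: B_def IDX_def not_le)
    then have "\<bar>Sigma_hat_1 X t j k - Sigma_hat_2 n X t j k\<bar> \<le> a t / real t"
      using t by (simp add: field_simps)
    also have "\<dots> \<le> 3 * \<gamma> * (50 * (2 * u * \<sigma>)) * max (sqrt (g / real t)) (g / real t)"
      unfolding a_def using t \<gamma> g u \<sigma> by (intro deviation_le_rate) auto
    finally show "\<bar>Sigma_hat_1 X t j k - Sigma_hat_2 n X t j k\<bar>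
        \<le> 300 * u * null_level \<delta> * \<sigma> * max (sqrt (g_fun p n / real t)) (g_fun p n / real t)"
      by (simp add: \<gamma>_def g_def mult_ac)
  qed
qed

lemma null_type_I_error:
  assumes N: "null_model n p w u P" and p: "1 \<le> p" and n: "2 \<le> n"
    and nL: "ln (exp 1 * real p) \<le> real n"
    and \<delta>: "0 < \<delta>" "\<delta> < 1" and w: "0 < w" and u: "0 < u" and lam: "lambda0 \<delta> w u \<le> lam"
  shows "(\<integral>X. psi_adaptive n p lam X \<partial>P) \<le> \<delta> / 4"
proof -
  have A: "assumption_ABC n p w u P" using N by (simp add: null_model_def)
  obtain \<Sigma> where \<Sigma>: "\<And>i j k. i \<in> {1..n} \<Longrightarrow> j < p \<Longrightarrow> k < p \<Longrightarrow> (\<integral>X. X i j * X i k \<partial>P) = \<Sigma> j k"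
    using N assumption_ABC_product_moment[OF A] by (auto simp: null_model_def)
  obtain jm where jm: "jm < p" "\<And>j. j < p \<Longrightarrow> \<Sigma> j j \<le> \<Sigma> jm jm"
    using ex_argmax_lessThan[of p "\<lambda>j. \<Sigma> j j"] p by auto
  define \<sigma>2 where "\<sigma>2 = \<Sigma> jm jm"
  have E: "(\<integral>X. (X i j)\<^sup>2 \<partial>P) = \<Sigma> j j" if "i \<in> {1..n}" "j < p" for i j
    using \<Sigma>[OF that that(2)] by (simp add: power2_eq_square)
  have "0 < \<sigma>2"
    using assumption_ABC_anticoncentration(1)[OF A _ unit_vec_in_unit_sphere[OF jm(1)], of 1 0] E[of 1 jm] jm n
    by (simp add: inner_unit_vec \<sigma>2_def)
  obtain B1 where B1: "B1 \<in> sets P" "measure P B1 \<le> 3 * \<delta> / 16"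
      and scale: "\<And>X. X \<in> space P \<Longrightarrow> X \<notin> B1 \<Longrightarrow> \<sigma>2 / null_rate \<delta> w \<le> sigma2_con n p X"
    using null_scale_good_event[OF A p nL jm(1) \<open>0 < \<sigma>2\<close> _ \<delta> w] E jm by (auto simp: \<sigma>2_def)
  obtain B2 where B2: "B2 \<in> sets P" "measure P B2 \<le> \<delta> / 16"
    and entries: "\<And>X t j k. X \<in> space P \<Longrightarrow> X \<notin> B2 \<Longrightarrow> t \<in> T_grid n \<Longrightarrow> j < p \<Longrightarrow> k < p \<Longrightarrow>
      \<bar>Sigma_hat_1 X t j k - Sigma_hat_2 n X t j k\<bar>
        \<le> 300 * u * null_level \<delta> * \<sigma>2 * max (sqrt (g_fun p n / real t)) (g_fun p n / real t)"
    using null_entries_good_event[OF A p n \<open>0 < \<sigma>2\<close> \<Sigma> _ \<delta> u] E jm by (auto simp: \<sigma>2_def)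
  have accept: "psi_adaptive n p lam X = 0" if X: "X \<in> space P" "X \<notin> B1 \<union> B2" for X
  proof -
    have "300 * u * null_level \<delta> * \<sigma>2 = lambda0 \<delta> w u * (\<sigma>2 / null_rate \<delta> w)"
      using null_constants[OF \<delta> w u] by (simp add: lambda0_def)
    also have "\<dots> \<le> lam * sigma2_con n p X"
      using lam scale[OF X(1)] X null_constants[OF \<delta> w u] \<open>0 < \<sigma>2\<close> by (intro mult_mono) auto
    finally have c: "300 * u * null_level \<delta> * \<sigma>2 \<le> lam * sigma2_con n p X" .
    have "S_hat n p X t s \<le> lam * sigma2_con n p X * h_fun p n s t"
      if "t \<in> T_grid n" "s \<in> S_grid p" for t s
    proof (rule S_hat_le_threshold[OF p that(2) _ _ c])
      show "1 \<le> t" using T_grid_bounds(1)[OF _ that(1)] n by simp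
      show "0 \<le> 300 * u * null_level \<delta> * \<sigma>2" using null_constants[OF \<delta> w u] u \<open>0 < \<sigma>2\<close> by simp
    qed (use entries[OF X(1) _ that(1)] X in auto)
    then show ?thesis by (auto simp: psi_adaptive_def not_less)
  qed
  have "(\<integral>X. psi_adaptive n p lam X \<partial>P) \<le> measure P (B1 \<union> B2)"
    using accept psi_adaptive_0_or_1 assumption_ABC_prob_space[OF A] B1(1) B2(1)
    by (intro integral_indicator_like_le_measure) auto
  also have "\<dots> \<le> \<delta> / 4" using measure_Un_le[OF B1(1) B2(1)] B1(2) B2(2) by simp
  finally show ?thesis .
qed

section \<open>Power of the test\<close>

text \<open>Constants of the alternative analysis: \<open>alt_level\<close> is the Bernstein level of the two
  projected sums, \<open>alt_scale\<close> the factor by which the scale estimate may exceed the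
  population scale, and \<open>C_alt\<close> the signal-to-noise constant of the theorem.\<close>

definition alt_level :: "real \<Rightarrow> real" where
  "alt_level \<delta> = ln (64 / \<delta>)"

definition alt_scale :: "real \<Rightarrow> real \<Rightarrow> real" where
  "alt_scale \<delta> u = 2 * u * (ln 2 + 2 + ln (32 / \<delta>))"

definition C_alt :: "real \<Rightarrow> real \<Rightarrow> real \<Rightarrow> real" where
  "C_alt \<delta> u lam = 2 * (800 * u * alt_level \<delta> + 8 * lam * alt_scale \<delta> u)\<^sup>2 + 2"

lemma alt_rates_le_signal:
  fixes M D s g t m K u b lam aU :: real
  assumes M: "0 < M" and D: "0 \<le> D" and s: "1 \<le> s" and g: "1 \<le> g" and t: "0 < t"
    and m: "m < 2 * t" "0 < m"
    and K: "K = 800 * u * b + 8 * lam * aU" and nn: "0 \<le> u" "0 \<le> b" "0 \<le> lam" "0 \<le> aU"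
    and hyp: "(2 * K\<^sup>2 + 2) * s\<^sup>2 * g \<le> m * (D / M)\<^sup>2"
  shows "100 * u * M * b / sqrt t + lam * aU * M * s * sqrt (g / t) \<le> D / 8"
proof -
  have h1: "(2 * K\<^sup>2 + 2) * s\<^sup>2 * g * M\<^sup>2 \<le> m * D\<^sup>2"
    using hyp M by (simp add: field_simps)
  have "(K * s * sqrt g * M)\<^sup>2 = K\<^sup>2 * s\<^sup>2 * g * M\<^sup>2" using g by (simp add: power_mult_distrib)
  also have "\<dots> \<le> ((2 * K\<^sup>2 + 2) * s\<^sup>2 * g * M\<^sup>2) / 2"
    using s g M by (simp add: field_simps)
  also have "\<dots> \<le> m * D\<^sup>2 / 2" using h1 by simp
  also have "\<dots> \<le> t * D\<^sup>2"
  proof -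
    have "m * D\<^sup>2 \<le> (2 * t) * D\<^sup>2" by (rule mult_right_mono) (use m in auto)
    then show ?thesis by simp
  qed
  also have "\<dots> = (sqrt t * D)\<^sup>2" using t by (simp add: power_mult_distrib)
  finally have "(K * s * sqrt g * M)\<^sup>2 \<le> (sqrt t * D)\<^sup>2" .
  then have kD: "K * s * sqrt g * M \<le> sqrt t * D"
    by (rule power2_le_imp_le) (use t D in simp)
  have g1: "1 \<le> sqrt g" using g by simp
  have "1 * 1 \<le> s * sqrt g" by (rule mult_mono[OF s g1]) (use s in auto)
  then have sg1: "1 \<le> s * sqrt g" by simp
  have st: "0 < sqrt t" using t by simp
  have "100 * u * M * b / sqrt t + lam * aU * M * s * sqrt (g / t) =
      (100 * u * b * M + lam * aU * (s * sqrt g) * M) / sqrt t"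
    using st by (simp add: real_sqrt_divide field_simps)
  also have "\<dots> \<le> (100 * u * b * (s * sqrt g) * M + lam * aU * (s * sqrt g) * M) / sqrt t"
  proof -
    have "100 * u * b * M * 1 \<le> 100 * u * b * M * (s * sqrt g)"
      by (rule mult_left_mono[OF sg1]) (use nn M in simp)
    then have "100 * u * b * M + lam * aU * (s * sqrt g) * M \<le> 100 * u * b * (s * sqrt g) * M + lam * aU * (s * sqrt g) * M"
      by (simp add: mult_ac)
    then show ?thesis using st by (intro divide_right_mono) auto
  qed
  also have "\<dots> = (K * s * sqrt g * M) / (8 * sqrt t)" using st by (simp add: K field_simps)
  also have "\<dots> \<le> (sqrt t * D) / (8 * sqrt t)" using kD st by (intro divide_right_mono) auto
  also have "\<dots> = D / 8" using st by simp
  finally show ?thesis .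
qed

lemma alt_scale_union_bound:
  assumes p: "1 \<le> p" and L: "1 \<le> L" "ln (exp 1 * real p) \<le> real L" and d: "0 < \<delta>" "\<delta> < 1" and u: "0 < u"
  shows "real p * (exp (- real L * alt_scale \<delta> u / (2 * u)) * 2 ^ L) \<le> \<delta> / 32"
proof -
  have e: "exp (- real L * alt_scale \<delta> u / (2 * u)) * 2 ^ L = (2 * exp (- (alt_scale \<delta> u / (2 * u)))) ^ L"
    by (simp add: power_mult_distrib exp_of_nat_mult[symmetric] mult_ac)
  have a: "alt_scale \<delta> u / (2 * u) = ln 2 + 2 + ln (32 / \<delta>)" using u by (simp add: alt_scale_def)
  have e1: "2 * exp (- (alt_scale \<delta> u / (2 * u))) = exp (- 2) * (\<delta> / 32)"
    unfolding a using d by (simp add: exp_minus exp_add exp_diff field_simps)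
  have e2: "exp (- real L * alt_scale \<delta> u / (2 * u)) * 2 ^ L = exp (- 2) ^ L * (\<delta> / 32) ^ L"
    unfolding e e1 by (rule power_mult_distrib)
  have "(\<delta> / 32) ^ L \<le> (\<delta> / 32) ^ 1" using d L by (intro power_decreasing) auto
  then have b1: "(\<delta> / 32) ^ L \<le> \<delta> / 32" by simp
  have "exp (- 2) ^ L = exp (- 2 * real L)" by (simp add: exp_of_nat_mult[symmetric] mult_ac)
  also have "\<dots> \<le> exp (- 2 * ln (exp 1 * real p))" using L by simp
  also have "\<dots> = 1 / (exp 1 * real p)\<^sup>2" using p by (intro exp_neg_2_ln) simp
  finally have b2: "exp (- 2) ^ L \<le> 1 / (exp 1 * real p)\<^sup>2" .
  have "real p * (exp (- 2) ^ L * (\<delta> / 32) ^ L) \<le> real p * (1 / (exp 1 * real p)\<^sup>2 * (\<delta> / 32))"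
    using b1 b2 d by (intro mult_left_mono mult_mono) auto
  also have "\<dots> = (\<delta> / 32) / (exp 1 ^ 2 * real p)" using p by (simp add: field_simps power2_eq_square)
  also have "\<dots> \<le> \<delta> / 32"
  proof -
    have "1 \<le> exp (1::real) ^ 2" by simp
    then have "1 * 1 \<le> exp 1 ^ 2 * real p" using p by (intro mult_mono) auto
    then show ?thesis using d by (simp add: divide_le_eq field_simps mult_left_mono[of 1, simplified])
  qed
  finally show ?thesis unfolding e2 .
qed

lemma alt_signal_beats_threshold:
  fixes q d D M \<sigma> h lam u b aU s g t m :: real
  assumes M: "0 < M" and D: "0 \<le> D" and s: "1 \<le> s" and g: "1 \<le> g" and t: "0 < t"
    and m: "m < 2 * t" "0 < m" and nn: "0 \<le> u" "0 \<le> b" "0 \<le> lam" "0 \<le> aU"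
    and hyp: "(2 * (800 * u * b + 8 * lam * aU)\<^sup>2 + 2) * s\<^sup>2 * g \<le> m * (D / M)\<^sup>2"
    and \<sigma>: "\<sigma> \<le> aU * M" and h: "0 \<le> h" "h \<le> s * sqrt (g / t)"
    and q: "\<bar>q - d\<bar> < 400 * u * M * b / sqrt t" and d: "D / 2 < \<bar>d\<bar>"
  shows "lam * \<sigma> * h < \<bar>q\<bar> / 4"
proof -
  define E where "E = u * M * b / sqrt t"
  define R where "R = lam * aU * M * s * sqrt (g / t)"
  have "100 * E + R \<le> D / 8"
    using alt_rates_le_signal[OF M D s g t m refl nn hyp] by (simp add: E_def R_def)
  moreover have "lam * \<sigma> * h \<le> R"
    using mult_mono[OF mult_left_mono[OF \<sigma> nn(3)] h(2)] h(1) nn M by (simp add: R_def mult_ac)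
  moreover have "\<bar>q - d\<bar> < 400 * E" using q by (simp add: E_def)
  moreover have "\<bar>d\<bar> \<le> \<bar>q\<bar> + \<bar>q - d\<bar>"
    using abs_triangle_ineq[of q "d - q"] by (simp add: abs_minus_commute)
  ultimately show ?thesis using d by linarith
qed

lemma alt_model_second_moment_le:
  assumes Alt: "alt_model n p w u t0 \<Sigma>1 \<Sigma>2 P" and "i \<in> {1..n}" "j < p" "1 \<le> s"
  shows "(\<integral>X. (X i j)\<^sup>2 \<partial>P) \<le> max (lam_max_s p s \<Sigma>1) (lam_max_s p s \<Sigma>2)"
proof -
  have "(\<integral>X. (X i j)\<^sup>2 \<partial>P) = (if i \<le> t0 then \<Sigma>1 j j else \<Sigma>2 j j)"
    using Alt assms assumption_ABC_second_moment_coordinate[of n p w u P i j]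
    by (simp add: alt_model_def)
  then show ?thesis
    using abs_diag_le_lam_max_s[OF assms(3,4), of \<Sigma>1] abs_diag_le_lam_max_s[OF assms(3,4), of \<Sigma>2]
    by auto
qed

lemma alt_model_signal_direction:
  assumes Alt: "alt_model n p w u t0 \<Sigma>1 \<Sigma>2 P" and p: "1 \<le> p" and s: "1 \<le> s"
    and D: "0 < lam_max_s p s (\<lambda>j k. \<Sigma>1 j k - \<Sigma>2 j k)"
  obtains v a1 a2 where "v \<in> sparse_sphere p s"
    "lam_max_s p s (\<lambda>j k. \<Sigma>1 j k - \<Sigma>2 j k) / 2 < \<bar>a1 - a2\<bar>"
    "a1 \<le> max (lam_max_s p s \<Sigma>1) (lam_max_s p s \<Sigma>2)" "a2 \<le> max (lam_max_s p s \<Sigma>1) (lam_max_s p s \<Sigma>2)"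
    "\<And>i. i \<in> {1..n} \<Longrightarrow> (\<integral>X. (inner_p p v (X i))\<^sup>2 \<partial>P) = (if i \<le> t0 then a1 else a2)"
proof -
  have A: "assumption_ABC n p w u P" and pd: "pos_def_p p \<Sigma>1" "pos_def_p p \<Sigma>2"
    and cov: "\<And>i j k. i \<in> {1..n} \<Longrightarrow> j < p \<Longrightarrow> k < p \<Longrightarrow>
      cov_mat P i j k = (if i \<le> t0 then \<Sigma>1 j k else \<Sigma>2 j k)"
    using Alt by (auto simp: alt_model_def)
  obtain v where v: "v \<in> sparse_sphere p s"
    and vD: "lam_max_s p s (\<lambda>j k. \<Sigma>1 j k - \<Sigma>2 j k) / 2 < \<bar>quad_form p (\<lambda>j k. \<Sigma>1 j k - \<Sigma>2 j k) v\<bar>"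
    using lam_max_s_half_attained[OF p s D] by blast
  have "quad_form p (cov_mat P i) v = (if i \<le> t0 then quad_form p \<Sigma>1 v else quad_form p \<Sigma>2 v)"
    if "i \<in> {1..n}" for i
    unfolding quad_form_def using cov that by (auto intro!: sum.cong)
  then show ?thesis
    using that[OF v] vD assumption_ABC_second_moment[OF A]
      abs_quad_form_le_lam_max_s[OF v, of \<Sigma>1] abs_quad_form_le_lam_max_s[OF v, of \<Sigma>2]
      quad_form_nonneg_if_pos_def[OF pd(1), of v] quad_form_nonneg_if_pos_def[OF pd(2), of v]
    by (simp add: quad_form_diff)
qed

lemma alt_scale_good_event:
  assumes A: "assumption_ABC n p w u P" and p: "1 \<le> p" and nL: "ln (exp 1 * real p) \<le> real n"
    and M: "0 < M" and E: "\<And>i j. i \<in> {1..n} \<Longrightarrow> j < p \<Longrightarrow> (\<integral>X. (X i j)\<^sup>2 \<partial>P) \<le> M"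
    and \<delta>: "0 < \<delta>" "\<delta> < 1" and u: "0 < u"
  obtains B where "B \<in> sets P" "measure P B \<le> \<delta> / 32"
    "\<And>X. X \<in> space P \<Longrightarrow> X \<notin> B \<Longrightarrow> sigma2_con n p X \<le> alt_scale \<delta> u * M"
proof -
  note [measurable] = assumption_ABC_measurable_coordinate[OF A]
  define L where "L = nat \<lceil>ln (exp 1 * real p)\<rceil>"
  have L: "1 \<le> L" "L \<le> n" "ln (exp 1 * real p) \<le> real L"
    using ceiling_ln_ep_bounds[OF p nL] by (simp_all add: L_def)
  define B where "B j = {X\<in>space P. real L * alt_scale \<delta> u * M \<le> (\<Sum>i\<in>{1..L}. (X i j)\<^sup>2)}" for j
  have B_sets: "B j \<in> sets P" for j unfolding B_def by measurable
  have B_prob: "measure P (B j) \<le> exp (- real L * alt_scale \<delta> u / (2 * u)) * 2 ^ L" if "j < p" for j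
  proof -
    have I: "{1..L} \<subseteq> {1..n}" using L by auto
    have "\<And>i. i \<in> {1..L} \<Longrightarrow> (\<integral>X. (X i j)\<^sup>2 \<partial>P) \<le> M" using E that I by auto
    from sum_sq_coordinate_upper_tail[OF A I that M u this, where a="alt_scale \<delta> u"]
    show ?thesis by (simp add: B_def)
  qed
  have "measure P (\<Union>j<p. B j) \<le> (\<Sum>j<p. measure P (B j))"
    by (rule measure_UNION_le) (use B_sets in auto)
  also have "\<dots> \<le> (\<Sum>j<p. exp (- real L * alt_scale \<delta> u / (2 * u)) * 2 ^ L)"
    by (rule sum_mono) (rule B_prob, simp)
  also have "\<dots> \<le> \<delta> / 32" using alt_scale_union_bound[OF p L(1,3) \<delta> u] by simp
  finally have prob: "measure P (\<Union>j<p. B j) \<le> \<delta> / 32" .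
  show ?thesis
  proof (rule that[OF _ prob])
    show "(\<Union>j<p. B j) \<in> sets P" using B_sets by auto
  next
    fix X assume X: "X \<in> space P" "X \<notin> (\<Union>j<p. B j)"
    have "Sigma_hat_1 X L j j \<le> alt_scale \<delta> u * M" if "j < p" for j
    proof -
      have "(\<Sum>i\<in>{1..L}. (X i j)\<^sup>2) < real L * (alt_scale \<delta> u * M)"
        using X that by (auto simp: B_def not_le mult.assoc)
      then show ?thesis using L by (simp add: Sigma_hat_1_def power2_eq_square field_simps)
    qed
    then show "sigma2_con n p X \<le> alt_scale \<delta> u * M"
      by (rule sigma2_con_le_diag_bound[OF p L_def])
  qed
qed

lemma alt_projection_good_event:
  assumes A: "assumption_ABC n p w u P" and v: "v \<in> unit_sphere p" and M: "0 < M" and u: "0 < u"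
    and t: "1 \<le> t" "t \<le> t0" "t \<le> n - t0"
    and E: "\<And>i. i \<in> {1..n} \<Longrightarrow> (\<integral>X. (inner_p p v (X i))\<^sup>2 \<partial>P) = (if i \<le> t0 then a1 else a2)"
    and a: "a1 \<le> M" "a2 \<le> M" and \<delta>: "0 < \<delta>" "\<delta> < 1"
  obtains B where "B \<in> sets P" "measure P B \<le> \<delta> / 16"
    "\<And>X. X \<in> space P \<Longrightarrow> X \<notin> B \<Longrightarrow>
      \<bar>quad_form p (\<lambda>j k. Sigma_hat_1 X t j k - Sigma_hat_2 n X t j k) v - (a1 - a2)\<bar>
        < 400 * u * M * alt_level \<delta> / sqrt (real t)"
proof -
  note [measurable] = assumption_ABC_measurable_coordinate[OF A]
  define x0 where "x0 = alt_level \<delta>"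
  have "\<delta> * exp 1 \<le> 1 * 3" using exp_le \<delta> by (intro mult_mono) auto
  then have x0: "1 \<le> x0"
    using \<delta> ln_ge_iff[of "64 / \<delta>" 1] by (simp add: x0_def alt_level_def field_simps)
  let ?Y = "\<lambda>X i. (inner_p p v (X i))\<^sup>2"
  define Q where "Q I = {X\<in>space P. 50 * (2 * u * M) * (sqrt (x0 * real (card I)) + x0)
     \<le> \<bar>\<Sum>i\<in>I. (?Y X i - (\<integral>Y. ?Y Y i \<partial>P))\<bar>}" for I
  let ?I1 = "{1..t}" and ?I2 = "{n - t + 1..n}"
  have I: "?I1 \<subseteq> {1..n}" "?I2 \<subseteq> {1..n}" "card ?I1 = t" "card ?I2 = t" using t by auto
  have Q_sets: "Q I \<in> sets P" for I unfolding Q_def inner_p_def by measurable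
  have Q_prob: "measure P (Q I) \<le> \<delta> / 32" if "I \<subseteq> {1..n}" for I
  proof -
    have "\<And>i. i \<in> I \<Longrightarrow> (\<integral>X. ?Y X i \<partial>P) \<le> M" using E a that by auto
    from sum_sq_inner_deviation[OF A that v M u this, of x0] x0
    show ?thesis using \<delta> by (simp add: Q_def x0_def alt_level_def exp_minus)
  qed
  have dev: "50 * (2 * u * M) * (sqrt (x0 * real t) + x0) \<le> 200 * u * M * x0 * sqrt (real t)"
  proof -
    have "sqrt x0 \<le> x0" using x0 by (intro real_le_lsqrt) (auto simp: power2_eq_square)
    then have "sqrt x0 * sqrt (real t) \<le> x0 * sqrt (real t)" by (rule mult_right_mono) simp
    moreover have "x0 * 1 \<le> x0 * sqrt (real t)" using x0 t by (intro mult_left_mono) auto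
    ultimately have "sqrt (x0 * real t) + x0 \<le> 2 * (x0 * sqrt (real t))"
      by (simp add: real_sqrt_mult)
    then show ?thesis using u M by (simp add: mult_left_mono)
  qed
  show ?thesis
  proof (rule that[of "Q ?I1 \<union> Q ?I2"])
    show "Q ?I1 \<union> Q ?I2 \<in> sets P" using Q_sets by auto
    show "measure P (Q ?I1 \<union> Q ?I2) \<le> \<delta> / 16"
      using measure_Un_le[OF Q_sets Q_sets, of ?I1 ?I2] Q_prob[OF I(1)] Q_prob[OF I(2)] by simp
  next
    fix X assume X: "X \<in> space P" "X \<notin> Q ?I1 \<union> Q ?I2"
    have "(\<Sum>i\<in>?I1. (\<integral>Y. ?Y Y i \<partial>P)) = (\<Sum>i\<in>?I1. a1)"
      using E t by (intro sum.cong) auto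
    then have E1: "(\<Sum>i\<in>?I1. (\<integral>Y. ?Y Y i \<partial>P)) = real t * a1" by simp
    have "(\<Sum>i\<in>?I2. (\<integral>Y. ?Y Y i \<partial>P)) = (\<Sum>i\<in>?I2. a2)"
      using E t by (intro sum.cong) auto
    then have E2: "(\<Sum>i\<in>?I2. (\<integral>Y. ?Y Y i \<partial>P)) = real t * a2" using I(4) by simp
    have close: "\<bar>(\<Sum>i\<in>I. ?Y X i) - real t * a\<bar> < 200 * u * M * x0 * sqrt (real t)"
      if "X \<notin> Q I" "card I = t" "(\<Sum>i\<in>I. (\<integral>Y. ?Y Y i \<partial>P)) = real t * a" for I a
    proof -
      have "\<bar>(\<Sum>i\<in>I. ?Y X i) - real t * a\<bar> < 50 * (2 * u * M) * (sqrt (x0 * real t) + x0)"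
        using that X(1) by (simp add: Q_def sum_subtractf not_le)
      then show ?thesis using dev by (rule less_le_trans)
    qed
    have "t \<le> n" using t by simp
    from quad_form_Sigma_hat_diff_close[OF t(1) this close[OF _ I(3) E1] close[OF _ I(4) E2]] X(2)
    show "\<bar>quad_form p (\<lambda>j k. Sigma_hat_1 X t j k - Sigma_hat_2 n X t j k) v - (a1 - a2)\<bar>
        < 400 * u * M * alt_level \<delta> / sqrt (real t)"
      by (simp add: x0_def)
  qed
qed

lemma alt_constants_nonneg:
  assumes "0 < \<delta>" "\<delta> < 1" "0 < u"
  shows "0 \<le> alt_level \<delta>" "0 \<le> alt_scale \<delta> u"
proof -
  have "0 < ln (64 / \<delta>)" "0 < ln (32 / \<delta>)" using assms by (simp_all add: field_simps)
  then show "0 \<le> alt_level \<delta>" "0 \<le> alt_scale \<delta> u" using assms by (simp_all add: alt_level_def alt_scale_def)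
qed

lemma C_alt_pos: "0 < C_alt \<delta> u lam"
  by (simp add: C_alt_def add_nonneg_pos)

lemma h_fun_eq_sqrt:
  assumes "g_fun p n \<le> real t" "0 \<le> g_fun p n"
  shows "h_fun p n s t = real s * sqrt (g_fun p n / real t)"
proof -
  define x where "x = g_fun p n / real t"
  have "0 \<le> x" "x \<le> 1" using assms by (auto simp: x_def divide_le_eq)
  then have "x \<le> sqrt x"
    using mult_left_mono[of x 1 x] by (intro real_le_rsqrt) (simp add: power2_eq_square)
  then show ?thesis by (simp add: h_fun_def x_def)
qed

lemma signal_condition_consequences:
  fixes C D M g s m :: real
  assumes D: "0 \<le> D" "D \<le> M" and M: "0 < M" and s: "1 \<le> s" and g: "1 \<le> g" and C: "2 \<le> C"
    and m: "0 \<le> m" and hyp: "C * s\<^sup>2 * g \<le> m * (D / M)\<^sup>2"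
  shows "C * g \<le> m" "0 < D"
proof -
  have "C * g * 1 \<le> C * g * s\<^sup>2" using s C g by (intro mult_left_mono) auto
  also have "\<dots> \<le> m * 1"
    using hyp mult_left_mono[of "(D / M)\<^sup>2" 1 m] D M m by (simp add: power_le_one mult_ac)
  finally show "C * g \<le> m" by simp
  have "0 < C * s\<^sup>2 * g" using C g s by simp
  then show "0 < D" using hyp D(1) by (cases "D = 0") auto
qed

lemma alt_type_II_error:
  assumes Alt: "alt_model n p w u t0 \<Sigma>1 \<Sigma>2 P" and p: "1 \<le> p"
    and nL: "ln (exp 1 * real p) \<le> real n"
    and \<delta>: "0 < \<delta>" "\<delta> < 1" and u: "0 < u" and lam: "0 \<le> lam" and s: "s \<in> {1..p}"
    and hyp: "real (min t0 (n - t0)) *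
         (lam_max_s p s (\<lambda>j k. \<Sigma>1 j k - \<Sigma>2 j k) /
          max (lam_max_s p s \<Sigma>1) (lam_max_s p s \<Sigma>2))\<^sup>2
        \<ge> C_alt \<delta> u lam * (real s)\<^sup>2 * g_fun p n"
  shows "(\<integral>X. 1 - psi_adaptive n p lam X \<partial>P) \<le> 3 * \<delta> / 32"
proof -
  have A: "assumption_ABC n p w u P" and t0: "t0 \<in> {1..n - 1}" and pd: "pos_def_p p \<Sigma>1" "pos_def_p p \<Sigma>2"
    using Alt by (auto simp: alt_model_def)
  define M where "M = max (lam_max_s p s \<Sigma>1) (lam_max_s p s \<Sigma>2)"
  define D where "D = lam_max_s p s (\<lambda>j k. \<Sigma>1 j k - \<Sigma>2 j k)"
  define m where "m = min t0 (n - t0)"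
  define g where "g = g_fun p n"
  have s1: "1 \<le> s" "s \<le> p" using s by auto
  have M: "0 < M" using lam_max_s_pos[OF p s1(1) pd(1)] by (simp add: M_def)
  have D: "0 \<le> D" "D \<le> M"
    using abs_diag_le_lam_max_s[of 0 p s "\<lambda>j k. \<Sigma>1 j k - \<Sigma>2 j k"] lam_max_s_diff_le_max[OF p s1(1) pd] p s1
    by (auto simp: D_def M_def)
  have g: "1 \<le> g" using g_fun_ge_1[OF p] by (simp add: g_def)
  have m: "1 \<le> m" "2 * m \<le> n" "m \<le> t0" "m \<le> n - t0" using t0 by (auto simp: m_def)
  have hyp': "C_alt \<delta> u lam * (real s)\<^sup>2 * g \<le> real m * (D / M)\<^sup>2"
    using hyp by (simp add: D_def M_def m_def g_def)
  have C: "2 \<le> C_alt \<delta> u lam" by (simp add: C_alt_def)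
  have Cg: "C_alt \<delta> u lam * g \<le> real m" and "0 < D"
    using signal_condition_consequences[OF D M _ g C _ hyp'] s1 by simp_all
  then obtain v a1 a2 where v: "v \<in> sparse_sphere p s" and a: "D / 2 < \<bar>a1 - a2\<bar>" "a1 \<le> M" "a2 \<le> M"
    and Ev: "\<And>i. i \<in> {1..n} \<Longrightarrow> (\<integral>X. (inner_p p v (X i))\<^sup>2 \<partial>P) = (if i \<le> t0 then a1 else a2)"
    using alt_model_signal_direction[OF Alt p s1(1)] unfolding D_def M_def by blast
  obtain t where t: "t \<in> T_grid n" "t \<le> m" "m < 2 * t" using T_grid_approx[OF m(1,2)] by blast
  obtain s' where s': "s' \<in> S_grid p" "s' \<le> s" "s < 2 * s'" using S_grid_approx[OF s1] by blast
  have t1: "1 \<le> t" using T_grid_bounds(1)[OF _ t(1)] m by simp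
  obtain B1 where B1: "B1 \<in> sets P" "measure P B1 \<le> \<delta> / 32"
    and scale: "\<And>X. X \<in> space P \<Longrightarrow> X \<notin> B1 \<Longrightarrow> sigma2_con n p X \<le> alt_scale \<delta> u * M"
    using alt_scale_good_event[OF A p nL M _ \<delta> u] alt_model_second_moment_le[OF Alt _ _ s1(1)]
    unfolding M_def by blast
  obtain B2 where B2: "B2 \<in> sets P" "measure P B2 \<le> \<delta> / 16"
    and proj: "\<And>X. X \<in> space P \<Longrightarrow> X \<notin> B2 \<Longrightarrow>
      \<bar>quad_form p (\<lambda>j k. Sigma_hat_1 X t j k - Sigma_hat_2 n X t j k) v - (a1 - a2)\<bar>
        < 400 * u * M * alt_level \<delta> / sqrt (real t)"
    using alt_projection_good_event[OF A _ M u t1 _ _ Ev a(2,3) \<delta>] v t m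
    by (auto simp: sparse_sphere_def)
  have reject: "1 - psi_adaptive n p lam X = 0" if X: "X \<in> space P" "X \<notin> B1 \<union> B2" for X
  proof -
    let ?q = "quad_form p (\<lambda>j k. Sigma_hat_1 X t j k - Sigma_hat_2 n X t j k) v"
    have S: "\<bar>?q\<bar> \<le> 4 * S_hat n p X t s'"
      unfolding S_hat_def using s' S_grid_ge_1[OF s'(1)] p v
      by (intro abs_quad_form_le_lam_hat_s) auto
    have "2 * g \<le> C_alt \<delta> u lam * g" using C g by (intro mult_right_mono) auto
    then have "g \<le> real t" using Cg t(3) by linarith
    then have "h_fun p n s' t = real s' * sqrt (g / real t)"
      using g h_fun_eq_sqrt[of p n t s'] by (simp add: g_def)
    moreover have "0 \<le> sqrt (g / real t)" using g by simp
    ultimately have h: "0 \<le> h_fun p n s' t" "h_fun p n s' t \<le> real s * sqrt (g / real t)"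
      using s'(2) by (simp_all add: mult_right_mono)
    have "lam * sigma2_con n p X * h_fun p n s' t < \<bar>?q\<bar> / 4"
      by (rule alt_signal_beats_threshold[where b="alt_level \<delta>" and aU="alt_scale \<delta> u" and u=u
            and s="real s" and t="real t" and m="real m" and d="a1 - a2", OF M D(1) _ g])
        (use s1 t1 t(3) m(1) u lam alt_constants_nonneg[OF \<delta> u] hyp' scale[OF X(1)] h
          proj[OF X(1)] a(1) X in \<open>auto simp: C_alt_def\<close>)
    then have "lam * sigma2_con n p X * h_fun p n s' t < S_hat n p X t s'" using S by linarith
    then show ?thesis using t(1) s'(1) by (auto simp: psi_adaptive_def)
  qed
  have "(\<integral>X. 1 - psi_adaptive n p lam X \<partial>P) \<le> measure P (B1 \<union> B2)"
    using reject psi_adaptive_0_or_1 assumption_ABC_prob_space[OF A] B1(1) B2(1)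
    by (intro integral_indicator_like_le_measure) (auto simp: psi_adaptive_def)
  also have "\<dots> \<le> 3 * \<delta> / 32" using measure_Un_le[OF B1(1) B2(1)] B1(2) B2(2) by simp
  finally show ?thesis .
qed

lemma adaptive_test_errors_le:
  assumes \<delta>: "0 < \<delta>" "\<delta> < 1" and w: "0 < w" and u: "0 < u" and lam: "lambda0 \<delta> w u \<le> lam"
    and nL: "real n \<ge> ln (exp 1 * real p)"
    and N: "null_model n p w u P0" and Alt: "alt_model n p w u t0 \<Sigma>1 \<Sigma>2 P1" and s: "s \<in> {1..p}"
    and hyp: "real (min t0 (n - t0)) *
         (lam_max_s p s (\<lambda>j k. \<Sigma>1 j k - \<Sigma>2 j k) /
          max (lam_max_s p s \<Sigma>1) (lam_max_s p s \<Sigma>2))\<^sup>2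
        \<ge> C_alt \<delta> u lam * (real s)\<^sup>2 * g_fun p n"
  shows "(\<integral>X. psi_adaptive n p lam X \<partial>P0) + (\<integral>X. 1 - psi_adaptive n p lam X \<partial>P1) \<le> \<delta>"
proof -
  have p: "1 \<le> p" using s by simp
  have n: "2 \<le> n" using Alt by (auto simp: alt_model_def)
  have "0 \<le> lam" using lam null_constants[OF \<delta> w u] by simp
  have "(\<integral>X. psi_adaptive n p lam X \<partial>P0) \<le> \<delta> / 4"
    by (rule null_type_I_error[OF N p n nL \<delta> w u lam])
  moreover have "(\<integral>X. 1 - psi_adaptive n p lam X \<partial>P1) \<le> 3 * \<delta> / 32"
    by (rule alt_type_II_error[OF Alt p nL \<delta> u \<open>0 \<le> lam\<close> s hyp])
  ultimately show ?thesis using \<delta> by simp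
qed

theorem proposition6:
  fixes \<delta> w u :: real
  assumes "0 < \<delta>" and "\<delta> < 1" and "0 < w" and "0 < u"
  shows "\<exists>lam0 > 0. \<forall>lam \<ge> lam0. \<exists>C > 0. \<forall>(n::nat) (p::nat) (t0::nat) \<Sigma>1 \<Sigma>2 P0 P1.
     real n \<ge> ln (exp 1 * real p) \<longrightarrow>
     null_model n p w u P0 \<longrightarrow>
     alt_model n p w u t0 \<Sigma>1 \<Sigma>2 P1 \<longrightarrow>
     (\<exists>s\<in>{1..p}. real (min t0 (n - t0)) *
         (lam_max_s p s (\<lambda>j k. \<Sigma>1 j k - \<Sigma>2 j k) /
          max (lam_max_s p s \<Sigma>1) (lam_max_s p s \<Sigma>2))\<^sup>2
        \<ge> C * (real s)\<^sup>2 * g_fun p n) \<longrightarrow>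
     (\<integral>X. psi_adaptive n p lam X \<partial>P0) + (\<integral>X. 1 - psi_adaptive n p lam X \<partial>P1) \<le> \<delta>"
proof (rule exI[of _ "lambda0 \<delta> w u"], intro conjI allI impI)
  show "0 < lambda0 \<delta> w u" using null_constants[OF assms] by simp
qed (use adaptive_test_errors_le[OF assms] C_alt_pos in blast)

end
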